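(* Let $\mathcal M$ and $\mathcal N$ be quantum channels satisfying $s$-detailed balance with respect to $\rho_\beta$. Then $\mathcal M\circ\mathcal N\circ\mathcal M$ also satisfies $s$-detailed balance with respect to $\rho_\beta$. Moreover, if $\mathcal N$ has $\rho_\beta$ as its unique fixed point and its spectrum is contained in $[0,1]$, then $\mathcal M\circ\mathcal N\circ\mathcal M$ also has $\rho_\beta$ as its unique fixed point and its spectrum lies in $[0,1]$.
   Context: Let $H$ be a Hermitian operator on $n$ qubits, $\beta>0$, $\rho_\beta=e^{-\beta H}/\operatorname{tr}(e^{-\beta H})$. A quantum channel is a CPTP map $\mathcal T(X)=\sum_uK_uXK_u^\dagger$ with dual $\mathcal T^\dagger(X)=\sum_uK_u^\dagger XK_u$. For $s\in[0,1]$, $\langle A,B\rangle_s=\operatorname{tr}(A^\dagger\rho_\beta^{1-s}B\rho_\beta^s)$; $\mathcal T$ satisfies $s$-detailed balance w.r.t. $\rho_\beta$ if $\langle A,\mathcal T^\dagger(B)\rangle_s=\langle\mathcal T^\dagger(A),B\rangle_s$ for all matrices $A,B$. Spectrum = set of eigenvalues of the channel as a linear map on $2^n\times2^n$ matrices; a fixed point is a state $\sigma$ with $\mathcal T(\sigma)=\sigma$. *)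

theory Defs
  imports Complex_Main "Jordan_Normal_Form.Matrix"
begin

definition adj :: "complex mat \<Rightarrow> complex mat" where
  "adj A = mat (dim_col A) (dim_row A) (\<lambda>(i,j). cnj (A $$ (j,i)))"

definition mtrace :: "complex mat \<Rightarrow> complex" where
  "mtrace A = (\<Sum>i<dim_row A. A $$ (i,i))"

definition hermitian :: "complex mat \<Rightarrow> bool" where
  "hermitian A \<longleftrightarrow> A \<in> carrier_mat (dim_row A) (dim_row A) \<and> adj A = A"

definition unitary :: "nat \<Rightarrow> complex mat \<Rightarrow> bool" where
  "unitary d U \<longleftrightarrow> U \<in> carrier_mat d d \<and> adj U * U = 1\<^sub>m d \<and> U * adj U = 1\<^sub>m d"

definition diag_of :: "complex list \<Rightarrow> complex mat" where
  "diag_of xs = mat (length xs) (length xs) (\<lambda>(i,j). if i = j then xs ! i else 0)"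

definition mat_fun :: "(real \<Rightarrow> real) \<Rightarrow> complex mat \<Rightarrow> complex mat" where
  "mat_fun f A = (let d = dim_row A;
      (U, ls) = (SOME (U, ls). unitary d U \<and> length ls = d \<and>
                   A = U * diag_of (map complex_of_real ls) * adj U)
    in U * diag_of (map (\<lambda>x. complex_of_real (f x)) ls) * adj U)"

definition gibbs :: "real \<Rightarrow> complex mat \<Rightarrow> complex mat" where
  "gibbs \<beta> H = (1 / mtrace (mat_fun (\<lambda>x. exp (- \<beta> * x)) H)) \<cdot>\<^sub>m mat_fun (\<lambda>x. exp (- \<beta> * x)) H"

definition mat_rpow :: "complex mat \<Rightarrow> real \<Rightarrow> complex mat" where
  "mat_rpow \<rho> t = mat_fun (\<lambda>x. x powr t) \<rho>"

definition msum :: "nat \<Rightarrow> complex mat list \<Rightarrow> complex mat" where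
  "msum d xs = foldr (+) xs (0\<^sub>m d d)"

definition kraus_rep :: "nat \<Rightarrow> complex mat list \<Rightarrow> (complex mat \<Rightarrow> complex mat) \<Rightarrow> bool" where
  "kraus_rep d Ks T \<longleftrightarrow> (\<forall>K\<in>set Ks. K \<in> carrier_mat d d) \<and>
     msum d (map (\<lambda>K. adj K * K) Ks) = 1\<^sub>m d \<and>
     (\<forall>X\<in>carrier_mat d d. T X = msum d (map (\<lambda>K. K * X * adj K) Ks))"

definition quantum_channel :: "nat \<Rightarrow> (complex mat \<Rightarrow> complex mat) \<Rightarrow> bool" where
  "quantum_channel d T \<longleftrightarrow> (\<exists>Ks. kraus_rep d Ks T)"

definition channel_dual :: "nat \<Rightarrow> (complex mat \<Rightarrow> complex mat) \<Rightarrow> complex mat \<Rightarrow> complex mat" where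
  "channel_dual d T X = (let Ks = (SOME Ks. kraus_rep d Ks T) in msum d (map (\<lambda>K. adj K * X * K) Ks))"

definition s_inner :: "complex mat \<Rightarrow> real \<Rightarrow> complex mat \<Rightarrow> complex mat \<Rightarrow> complex" where
  "s_inner \<rho> s A B = mtrace (adj A * mat_rpow \<rho> (1 - s) * B * mat_rpow \<rho> s)"

definition detailed_balance :: "nat \<Rightarrow> complex mat \<Rightarrow> real \<Rightarrow> (complex mat \<Rightarrow> complex mat) \<Rightarrow> bool" where
  "detailed_balance d \<rho> s T \<longleftrightarrow>
     (\<forall>A\<in>carrier_mat d d. \<forall>B\<in>carrier_mat d d.
        s_inner \<rho> s A (channel_dual d T B) = s_inner \<rho> s (channel_dual d T A) B)"

definition is_state :: "nat \<Rightarrow> complex mat \<Rightarrow> bool" where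
  "is_state d \<sigma> \<longleftrightarrow> \<sigma> \<in> carrier_mat d d \<and> adj \<sigma> = \<sigma> \<and> mtrace \<sigma> = 1 \<and>
     (\<forall>v\<in>carrier_vec d. \<exists>r::real. r \<ge> 0 \<and> map_vec cnj v \<bullet> (\<sigma> *\<^sub>v v) = complex_of_real r)"

definition fixed_points :: "nat \<Rightarrow> (complex mat \<Rightarrow> complex mat) \<Rightarrow> complex mat set" where
  "fixed_points d T = {\<sigma>. is_state d \<sigma> \<and> T \<sigma> = \<sigma>}"

definition channel_spectrum :: "nat \<Rightarrow> (complex mat \<Rightarrow> complex mat) \<Rightarrow> complex set" where
  "channel_spectrum d T = {c. \<exists>X\<in>carrier_mat d d. X \<noteq> 0\<^sub>m d d \<and> T X = c \<cdot>\<^sub>m X}"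

end

theory Submission
  imports Defs "Jordan_Normal_Form.Spectral_Radius" "Jordan_Normal_Form.Schur_Decomposition"
begin

text \<open>
  The dual of \<open>M \<circ> N \<circ> M\<close> is \<open>M\<^sup>\<dagger> N\<^sup>\<dagger> M\<^sup>\<dagger>\<close>, a palindromic product of maps that are
  self-adjoint for \<open>\<langle>_, _\<rangle>\<^sub>s\<close>, hence itself self-adjoint.

  For the second part, \<open>frame X = \<rho>\<^bsup>(1-s)/2\<^esup> X \<rho>\<^bsup>s/2\<^esup>\<close> is an isometry from \<open>\<langle>_, _\<rangle>\<^sub>s\<close> onto
  the Hilbert--Schmidt inner product. So for a channel \<open>T\<close> in detailed balance the map
  \<open>L\<^sub>T = framed_dual T = frame \<circ> T\<^sup>\<dagger> \<circ> frame\<^sup>-\<^sup>1\<close> is Hilbert--Schmidt self-adjoint, and detailed balance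
  also says \<open>T \<circ> frame = frame \<circ> L\<^sub>T\<close>. A dual channel is positive and unital, which puts the
  spectrum of \<open>L\<^sub>M\<close> into \<open>[-1, 1]\<close>, while \<open>L\<^sub>N\<close> has the spectrum of \<open>N\<close>, in \<open>[0, 1]\<close>. Hence
  \<open>\<langle>Y, L\<^sub>M L\<^sub>N L\<^sub>M Y\<rangle> = \<langle>L\<^sub>M Y, L\<^sub>N L\<^sub>M Y\<rangle>\<close> lies between \<open>0\<close> and
  \<open>\<parallel>L\<^sub>M Y\<parallel>\<^sup>2 \<le> \<parallel>Y\<parallel>\<^sup>2\<close>, which confines the spectrum of \<open>M \<circ> N \<circ> M\<close> to \<open>[0, 1]\<close>.
  If \<open>M N M \<sigma> = \<sigma>\<close>, all these inequalities are equalities, so \<open>N\<close> fixes \<open>M \<sigma>\<close>. As the unique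
  fixed state \<open>\<rho>\<^sub>\<beta>\<close> of \<open>N\<close> is faithful, \<open>M \<sigma>\<close> is then a multiple of \<open>\<rho>\<^sub>\<beta>\<close>, and
  \<open>\<sigma> = M N M \<sigma>\<close> is the same multiple of \<open>M \<rho>\<^sub>\<beta> = \<rho>\<^sub>\<beta>\<close>.
\<close>

lemma adj_dim[simp]: "dim_row (adj A) = dim_col A" "dim_col (adj A) = dim_row A"
  by (auto simp: adj_def)

lemma adj_index[simp]: "i < dim_col A \<Longrightarrow> j < dim_row A \<Longrightarrow> adj A $$ (i,j) = cnj (A $$ (j,i))"
  by (auto simp: adj_def)

lemma adj_carrier[simp]: "A \<in> carrier_mat nr nc \<Longrightarrow> adj A \<in> carrier_mat nc nr"
  by (auto simp: adj_def)

lemma adj_adj[simp]: "adj (adj A) = A"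
  by (rule eq_matI) auto

lemma adj_mult: assumes "A \<in> carrier_mat nr n" "B \<in> carrier_mat n nc"
  shows "adj (A * B) = adj B * adj A"
  using assms by (intro eq_matI) (auto simp: scalar_prod_def row_def col_def intro!: sum.cong)

lemma adj_add: assumes "A \<in> carrier_mat nr nc" "B \<in> carrier_mat nr nc"
  shows "adj (A + B) = adj A + adj B"
  using assms by (intro eq_matI) auto

lemma adj_smult: "adj (c \<cdot>\<^sub>m A) = cnj c \<cdot>\<^sub>m adj A"
  by (intro eq_matI) auto

lemma mult_carrier_square[simp]: "A \<in> carrier_mat d d \<Longrightarrow> B \<in> carrier_mat d d \<Longrightarrow> A * B \<in> carrier_mat d d"
  by (metis mult_carrier_mat)

lemma mult_mat_vec_carrier_square[simp]: "A \<in> carrier_mat d d \<Longrightarrow> v \<in> carrier_vec d \<Longrightarrow> A *\<^sub>v v \<in> carrier_vec d"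
  by (metis mult_mat_vec_carrier)

definition cinner :: "complex vec \<Rightarrow> complex vec \<Rightarrow> complex" where
  "cinner v w = (\<Sum>i\<in>{0..<dim_vec v}. cnj (v $ i) * w $ i)"

definition vec_norm :: "complex vec \<Rightarrow> real" where
  "vec_norm v = sqrt (\<Sum>i\<in>{0..<dim_vec v}. (cmod (v $ i))^2)"

lemma vec_norm_sq: "(vec_norm v)^2 = (\<Sum>i\<in>{0..<dim_vec v}. (cmod (v $ i))^2)"
  unfolding vec_norm_def by (simp add: sum_nonneg)

lemma cinner_self: "cinner v v = of_real ((vec_norm v)^2)"
  unfolding vec_norm_sq cinner_def of_real_sum
  by (intro sum.cong refl) (metis complex_norm_square mult.commute)

lemma vec_norm_pos: assumes "v \<in> carrier_vec n" "v \<noteq> 0\<^sub>v n" shows "vec_norm v > 0"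
proof -
  have "(\<Sum>i\<in>{0..<dim_vec v}. (cmod (v $ i))^2) \<noteq> 0"
  proof
    assume "(\<Sum>i\<in>{0..<dim_vec v}. (cmod (v $ i))^2) = 0"
    then have "\<forall>i\<in>{0..<dim_vec v}. (cmod (v $ i))^2 = 0"
      by (subst sum_nonneg_eq_0_iff[symmetric]) auto
    then have "v = 0\<^sub>v n" using assms(1) by (intro eq_vecI) auto
    with assms(2) show False ..
  qed
  moreover have "0 \<le> (\<Sum>i\<in>{0..<dim_vec v}. (cmod (v $ i))^2)" by (intro sum_nonneg) auto
  ultimately show ?thesis unfolding vec_norm_def by simp
qed

lemma cinner_smult_left: "cinner (c \<cdot>\<^sub>v v) w = cnj c * cinner v w"
  by (simp add: cinner_def sum_distrib_left ac_simps)

lemma cinner_smult_right: "w \<in> carrier_vec n \<Longrightarrow> v \<in> carrier_vec n \<Longrightarrow> cinner v (c \<cdot>\<^sub>v w) = c * cinner v w"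
  by (simp add: cinner_def sum_distrib_left ac_simps)

lemma cinner_add_right: "v \<in> carrier_vec n \<Longrightarrow> x \<in> carrier_vec n \<Longrightarrow> y \<in> carrier_vec n \<Longrightarrow>
    cinner v (x + y) = cinner v x + cinner v y"
  by (simp add: cinner_def sum.distrib distrib_left)

lemma cinner_adj: assumes "A \<in> carrier_mat nr nc" "v \<in> carrier_vec nr" "w \<in> carrier_vec nc"
  shows "cinner v (A *\<^sub>v w) = cinner (adj A *\<^sub>v v) w"
proof -
  have "cinner v (A *\<^sub>v w) = (\<Sum>i\<in>{0..<nr}. \<Sum>k\<in>{0..<nc}. cnj (v $ i) * A $$ (i,k) * w $ k)"
    using assms by (simp add: cinner_def scalar_prod_def row_def sum_distrib_left mult.assoc)
  also have "\<dots> = (\<Sum>k\<in>{0..<nc}. \<Sum>i\<in>{0..<nr}. cnj (v $ i) * A $$ (i,k) * w $ k)"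
    by (rule sum.swap)
  also have "\<dots> = cinner (adj A *\<^sub>v v) w"
    using assms by (simp add: cinner_def scalar_prod_def row_def sum_distrib_left sum_distrib_right ac_simps)
  finally show ?thesis .
qed

lemma adj_mult_index: assumes "A \<in> carrier_mat n m" "B \<in> carrier_mat n k" "i < m" "j < k"
  shows "(adj A * B) $$ (i,j) = cinner (col A i) (col B j)"
  using assms by (simp add: cinner_def scalar_prod_def row_def col_def)

lemma scalar_prod_cnj_cinner: "dim_vec w = dim_vec v \<Longrightarrow> map_vec cnj v \<bullet> w = cinner v w"
  by (simp add: scalar_prod_def cinner_def)

lemma cinner_unit_vec: "w \<in> carrier_vec n \<Longrightarrow> p < n \<Longrightarrow> cinner (unit_vec n p) w = w $ p"
proof -
  assume w: "w \<in> carrier_vec n" and p: "p < n"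
  have "cinner (unit_vec n p) w = (\<Sum>i\<in>{0..<n}. if i = p then w $ i else 0)"
    unfolding cinner_def using p by (intro sum.cong) auto
  then show ?thesis using p by simp
qed

lemma mult_mat_unit_vec_index:
  "(A :: complex mat) \<in> carrier_mat n n \<Longrightarrow> p < n \<Longrightarrow> q < n \<Longrightarrow> (A *\<^sub>v unit_vec n q) $ p = A $$ (p,q)"
  using scalar_prod_right_unit[of q n "row A p"] by simp

lemma unitary_mult: assumes "unitary d U" "unitary d V" shows "unitary d (U * V)"
proof -
  have U: "U \<in> carrier_mat d d" "adj U * U = 1\<^sub>m d" "U * adj U = 1\<^sub>m d" using assms unfolding unitary_def by auto
  have V: "V \<in> carrier_mat d d" "adj V * V = 1\<^sub>m d" "V * adj V = 1\<^sub>m d" using assms unfolding unitary_def by auto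
  have a: "adj (U * V) = adj V * adj U" using U V adj_mult by blast
  have e1: "adj U * (U * V) = V"
    using U V by (subst assoc_mult_mat[symmetric, of "adj U" d d U d V d]) auto
  have "adj V * adj U * (U * V) = adj V * (adj U * (U * V))"
    using U V by (intro assoc_mult_mat) auto
  also have "\<dots> = 1\<^sub>m d" using U V e1 by simp
  finally have 1: "adj (U * V) * (U * V) = 1\<^sub>m d" using a by simp
  have e2: "V * (adj V * adj U) = adj U"
    using U V by (subst assoc_mult_mat[symmetric, of V d d "adj V" d "adj U" d]) auto
  have "U * V * (adj V * adj U) = U * (V * (adj V * adj U))"
    using U V by (intro assoc_mult_mat) auto
  also have "\<dots> = 1\<^sub>m d" using U V e2 by simp
  finally have 2: "U * V * adj (U * V) = 1\<^sub>m d" using a by simp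
  show ?thesis unfolding unitary_def using 1 2 U V by auto
qed

lemma unitary_cancel: assumes "unitary n U" "X \<in> carrier_mat n k"
  shows "adj U * (U * X) = X" "U * (adj U * X) = X"
proof -
  have U: "U \<in> carrier_mat n n" "adj U * U = 1\<^sub>m n" "U * adj U = 1\<^sub>m n" using assms unfolding unitary_def by auto
  show "adj U * (U * X) = X" using U assms(2) by (subst assoc_mult_mat[symmetric, of _ n n _ n _ k]) auto
  show "U * (adj U * X) = X" using U assms(2) by (subst assoc_mult_mat[symmetric, of _ n n _ n _ k]) auto
qed

lemma cinner_unitary: assumes "unitary m W" "x \<in> carrier_vec m" "y \<in> carrier_vec m"
  shows "cinner (W *\<^sub>v x) (W *\<^sub>v y) = cinner x y"
proof -
  have W: "W \<in> carrier_mat m m" "adj W * W = 1\<^sub>m m" using assms unfolding unitary_def by auto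
  have "cinner (W *\<^sub>v x) (W *\<^sub>v y) = cinner (adj W *\<^sub>v (W *\<^sub>v x)) y"
    using cinner_adj[OF W(1) mult_mat_vec_carrier[OF W(1) assms(2)] assms(3)] .
  also have "adj W *\<^sub>v (W *\<^sub>v x) = x" using W assms
    by (subst assoc_mult_mat_vec[symmetric, of _ m m _ m]) auto
  finally show ?thesis .
qed

lemma smult_mat_mult_vec: "A \<in> carrier_mat n k \<Longrightarrow> v \<in> carrier_vec k \<Longrightarrow> (c \<cdot>\<^sub>m A) *\<^sub>v v = c \<cdot>\<^sub>v (A *\<^sub>v v)"
  for c :: complex by (intro eq_vecI) (auto simp: scalar_prod_def sum_distrib_left ac_simps)

lemma smult_smult_mat: "a \<cdot>\<^sub>m (b \<cdot>\<^sub>m A) = (a * b) \<cdot>\<^sub>m A" for a b :: complex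
  by (rule eq_matI) auto

lemma cinner_lincomb: assumes "A \<in> carrier_mat n n" "B \<in> carrier_mat n n" "v \<in> carrier_vec n"
  shows "cinner v ((a \<cdot>\<^sub>m A + b \<cdot>\<^sub>m B) *\<^sub>v v) = a * cinner v (A *\<^sub>v v) + b * cinner v (B *\<^sub>v v)"
  using assms by (simp add: add_mult_distrib_mat_vec[of _ n n] cinner_add_right[of _ n] cinner_smult_right[of _ n]
      smult_mat_mult_vec[of _ n n])

lemma diag_of_carrier[simp]: "diag_of ls \<in> carrier_mat (length ls) (length ls)"
  by (simp add: diag_of_def)

lemma diag_of_dim[simp]: "dim_row (diag_of xs) = length xs" "dim_col (diag_of xs) = length xs"
  by (auto simp: diag_of_def)

lemma diag_of_mult: "diag_of (map f xs) * diag_of (map g xs) = diag_of (map (\<lambda>x. f x * g x) xs)"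
proof (rule eq_matI)
  fix i j assume "i < dim_row (diag_of (map (\<lambda>x. f x * g x) xs))" "j < dim_col (diag_of (map (\<lambda>x. f x * g x) xs))"
  then have ij: "i < length xs" "j < length xs" by auto
  have "(diag_of (map f xs) * diag_of (map g xs)) $$ (i,j) =
     (\<Sum>k\<in>{0..<length xs}. diag_of (map f xs) $$ (i,k) * diag_of (map g xs) $$ (k,j))"
    using ij by (auto simp: scalar_prod_def intro!: sum.cong)
  also have "\<dots> = (\<Sum>k\<in>{0..<length xs}. if k = i then (if i = j then f (xs ! i) * g (xs ! i) else 0) else 0)"
    using ij by (intro sum.cong refl) (auto simp: diag_of_def)
  also have "\<dots> = diag_of (map (\<lambda>x. f x * g x) xs) $$ (i,j)" using ij by (simp add: diag_of_def)
  finally show "(diag_of (map f xs) * diag_of (map g xs)) $$ (i,j) = diag_of (map (\<lambda>x. f x * g x) xs) $$ (i,j)" .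
qed auto

lemma diag_of_adj: "adj (diag_of (map f xs)) = diag_of (map (\<lambda>x. cnj (f x)) xs)"
  by (rule eq_matI) (auto simp: diag_of_def)

lemma diag_of_one: "diag_of (map (\<lambda>x. 1) xs) = 1\<^sub>m (length xs)"
  by (rule eq_matI) (auto simp: diag_of_def)

lemma diag_of_smult: "c \<cdot>\<^sub>m diag_of (map f xs) = diag_of (map (\<lambda>x. c * f x) xs)"
  by (rule eq_matI) (auto simp: diag_of_def)

lemma diag_of_mult_vec: assumes "length ls = m" "c \<in> carrier_vec m"
  shows "diag_of (map complex_of_real ls) *\<^sub>v c = vec m (\<lambda>i. complex_of_real (ls ! i) * c $ i)"
proof (rule eq_vecI)
  fix i assume "i < dim_vec (vec m (\<lambda>i. complex_of_real (ls ! i) * c $ i))"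
  then have i: "i < m" by simp
  have "(diag_of (map complex_of_real ls) *\<^sub>v c) $ i =
      (\<Sum>k\<in>{0..<m}. diag_of (map complex_of_real ls) $$ (i,k) * c $ k)"
    using assms i by (auto simp: scalar_prod_def intro!: sum.cong)
  also have "\<dots> = (\<Sum>k\<in>{0..<m}. if k = i then complex_of_real (ls ! k) * c $ k else 0)"
    using assms i by (intro sum.cong refl) (auto simp: diag_of_def)
  finally show "(diag_of (map complex_of_real ls) *\<^sub>v c) $ i = vec m (\<lambda>i. complex_of_real (ls ! i) * c $ i) $ i"
    using i by simp
qed (use assms in auto)

lemma mtrace_add: "A \<in> carrier_mat d d \<Longrightarrow> B \<in> carrier_mat d d \<Longrightarrow> mtrace (A + B) = mtrace A + mtrace B"
  by (simp add: mtrace_def sum.distrib)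

lemma mtrace_smult: "A \<in> carrier_mat d d \<Longrightarrow> mtrace (c \<cdot>\<^sub>m A) = c * mtrace A"
  by (auto simp: mtrace_def sum_distrib_left intro!: sum.cong)

lemma mtrace_comm: assumes "A \<in> carrier_mat n m" "B \<in> carrier_mat m n"
  shows "mtrace (A * B) = mtrace (B * A)"
proof -
  have "mtrace (A * B) = (\<Sum>i<n. \<Sum>k<m. A $$ (i,k) * B $$ (k,i))"
    using assms by (simp add: mtrace_def scalar_prod_def atLeast0LessThan)
  also have "\<dots> = (\<Sum>k<m. \<Sum>i<n. B $$ (k,i) * A $$ (i,k))"
    by (subst sum.swap) (simp add: mult.commute)
  also have "\<dots> = mtrace (B * A)"
    using assms by (simp add: mtrace_def scalar_prod_def atLeast0LessThan)
  finally show ?thesis .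
qed

lemma mtrace_diag_of: "mtrace (diag_of xs) = (\<Sum>i<length xs. xs ! i)"
  by (simp add: mtrace_def diag_of_def)

lemma mtrace_unitary_conj: assumes "unitary d U" "D \<in> carrier_mat d d"
  shows "mtrace (U * D * adj U) = mtrace D"
proof -
  have U: "U \<in> carrier_mat d d" using assms unitary_def by auto
  have "mtrace (U * D * adj U) = mtrace (adj U * (U * D))"
    using mtrace_comm[of "U * D" d d "adj U"] U assms by simp
  also have "adj U * (U * D) = D" using unitary_cancel(1)[OF assms(1) assms(2)] .
  finally show ?thesis .
qed

lemma mtrace_mult_eqI: assumes "Y1 \<in> carrier_mat d d" "Y2 \<in> carrier_mat d d"
  and "\<And>X. X \<in> carrier_mat d d \<Longrightarrow> mtrace (Y1 * X) = mtrace (Y2 * X)"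
  shows "Y1 = Y2"
proof (rule eq_matI)
  fix i j assume "i < dim_row Y2" "j < dim_col Y2"
  then have ij: "i < d" "j < d" using assms by auto
  define E where "E = mat d d (\<lambda>(k,l). if k = j \<and> l = i then 1 else (0 :: complex))"
  have E: "E \<in> carrier_mat d d" unfolding E_def by simp
  have trE: "mtrace (Y * E) = Y $$ (i,j)" if "Y \<in> carrier_mat d d" for Y
  proof -
    have "mtrace (Y * E) = (\<Sum>k\<in>{0..<d}. \<Sum>l\<in>{0..<d}. Y $$ (k,l) * (if l = j \<and> k = i then 1 else 0))"
      using that by (simp add: mtrace_def scalar_prod_def E_def atLeast0LessThan)
    also have "\<dots> = (\<Sum>k\<in>{0..<d}. if k = i then Y $$ (k,j) else 0)"
      using ij by (intro sum.cong refl) (auto simp: if_distrib sum.delta cong: if_cong)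
    finally show ?thesis using ij by simp
  qed
  show "Y1 $$ (i,j) = Y2 $$ (i,j)" using assms(3)[OF E] trE assms(1,2) by simp
qed (use assms in auto)

section \<open>The spectral theorem for Hermitian matrices\<close>

definition diag_ext :: "complex \<Rightarrow> complex mat \<Rightarrow> complex mat" where
  "diag_ext c X = mat (Suc (dim_row X)) (Suc (dim_col X))
     (\<lambda>(i,j). if i = 0 then (if j = 0 then c else 0) else if j = 0 then 0 else X $$ (i - 1, j - 1))"

lemma diag_ext_carrier[simp]: "X \<in> carrier_mat m k \<Longrightarrow> diag_ext c X \<in> carrier_mat (Suc m) (Suc k)"
  by (auto simp: diag_ext_def)

lemma diag_ext_dim[simp]: "dim_row (diag_ext c X) = Suc (dim_row X)" "dim_col (diag_ext c X) = Suc (dim_col X)"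
  by (auto simp: diag_ext_def)

lemma diag_ext_index: "i < Suc (dim_row X) \<Longrightarrow> j < Suc (dim_col X) \<Longrightarrow> diag_ext c X $$ (i,j) =
   (if i = 0 then (if j = 0 then c else 0) else if j = 0 then 0 else X $$ (i - 1, j - 1))"
  by (auto simp: diag_ext_def)

lemma diag_ext_mult: assumes "X \<in> carrier_mat m k" "Y \<in> carrier_mat k l"
  shows "diag_ext a X * diag_ext b Y = diag_ext (a * b) (X * Y)"
proof (rule eq_matI)
  fix i j assume ij: "i < dim_row (diag_ext (a * b) (X * Y))" "j < dim_col (diag_ext (a * b) (X * Y))"
  have "(diag_ext a X * diag_ext b Y) $$ (i,j) = (\<Sum>t\<in>{0..<Suc k}. diag_ext a X $$ (i,t) * diag_ext b Y $$ (t,j))"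
    using assms ij by (simp add: scalar_prod_def row_def col_def)
  also have "\<dots> = diag_ext a X $$ (i,0) * diag_ext b Y $$ (0,j) +
      (\<Sum>t\<in>{0..<k}. diag_ext a X $$ (i,Suc t) * diag_ext b Y $$ (Suc t,j))"
    by (simp add: sum.atLeast0_lessThan_Suc_shift del: sum.op_ivl_Suc)
  also have "\<dots> = diag_ext (a * b) (X * Y) $$ (i,j)"
    using assms ij by (cases i; cases j) (auto simp: diag_ext_index scalar_prod_def row_def col_def)
  finally show "(diag_ext a X * diag_ext b Y) $$ (i,j) = diag_ext (a * b) (X * Y) $$ (i,j)" .
qed (use assms in auto)

lemma diag_ext_adj: "adj (diag_ext c X) = diag_ext (cnj c) (adj X)"
  by (rule eq_matI) (auto simp: diag_ext_index)

lemma diag_ext_one: "diag_ext 1 (1\<^sub>m m) = 1\<^sub>m (Suc m)"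
  by (rule eq_matI) (auto simp: diag_ext_index)

lemma diag_of_Cons: "diag_of (c # ls) = diag_ext c (diag_of ls)"
  by (rule eq_matI) (auto simp: diag_ext_index diag_of_def nth_Cons')

lemma unitary_diag_ext: assumes "unitary m W" shows "unitary (Suc m) (diag_ext 1 W)"
  using assms unfolding unitary_def
  by (auto simp: diag_ext_adj diag_ext_mult[of _ m m _ m] diag_ext_one)

lemma unitary_normalized_cols:
  assumes len: "length ws = n" and ws: "set ws \<subseteq> carrier_vec n"
    and orth: "\<And>i j. i < n \<Longrightarrow> j < n \<Longrightarrow> cinner (ws ! i) (ws ! j) = 0 \<longleftrightarrow> i \<noteq> j"
  shows "unitary n (mat n n (\<lambda>(i,j). (ws ! j) $ i / of_real (vec_norm (ws ! j))))"
    (is "unitary n ?U")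
proof -
  have wsc: "ws ! j \<in> carrier_vec n" if "j < n" for j using ws len that by auto
  have pos: "vec_norm (ws ! j) > 0" if "j < n" for j
  proof -
    have "ws ! j \<noteq> 0\<^sub>v n" using orth[OF that that] by (auto simp: cinner_def)
    then show ?thesis using vec_norm_pos wsc that by auto
  qed
  have U: "?U \<in> carrier_mat n n" by simp
  have col: "col ?U j = (1 / of_real (vec_norm (ws ! j))) \<cdot>\<^sub>v ws ! j" if "j < n" for j
    using that wsc[OF that] by (intro eq_vecI) auto
  have "adj ?U * ?U = 1\<^sub>m n"
  proof (rule eq_matI)
    fix i j assume "i < dim_row (1\<^sub>m n)" "j < dim_col (1\<^sub>m n)"
    then have ij: "i < n" "j < n" by auto
    have "(adj ?U * ?U) $$ (i,j) = (1 / of_real (vec_norm (ws ! i))) * (1 / of_real (vec_norm (ws ! j)))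
        * cinner (ws ! i) (ws ! j)"
      using adj_mult_index[OF U U ij] ij col wsc by (simp add: cinner_smult_left cinner_smult_right[of _ n])
    also have "\<dots> = 1\<^sub>m n $$ (i,j)"
      using orth[OF ij] ij pos[OF ij(2)] cinner_self[of "ws ! j"] by (cases "i = j") (simp_all add: power2_eq_square)
    finally show "(adj ?U * ?U) $$ (i,j) = 1\<^sub>m n $$ (i,j)" .
  qed (use U in auto)
  moreover have "?U * adj ?U = 1\<^sub>m n"
    using mat_mult_left_right_inverse[OF adj_carrier[OF U] U calculation] .
  ultimately show ?thesis using U unfolding unitary_def by blast
qed

lemma unitary_completion: assumes u: "u \<in> carrier_vec n" and u1: "cinner u u = 1"
  shows "\<exists>U. unitary n U \<and> col U 0 = u"
proof -
  have u0: "u \<noteq> 0\<^sub>v n" using u1 u by (auto simp: cinner_def)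
  interpret cof_vec_space n "TYPE(complex)" .
  define b where "b = basis_completion u"
  from basis_completion[OF u u0, folded b_def]
  have dist_b: "distinct b" and indep: "\<not> lin_dep (set b)" and b: "set b \<subseteq> carrier_vec n"
    and hdb: "hd b = u" and len_b: "length b = n" by auto
  have n: "n > 0" using u0 u by (cases n) auto
  from hdb len_b n obtain vs where bv: "b = u # vs" by (cases b, auto)
  define ws where "ws = gram_schmidt n b"
  from gram_schmidt_result[OF b dist_b indep refl, folded ws_def]
  have ws: "set ws \<subseteq> carrier_vec n" "corthogonal ws" "length ws = n" by (auto simp: len_b)
  have "hd ws = u" unfolding ws_def bv using u by simp
  then have ws0: "ws ! 0 = u" using ws n by (cases ws) auto
  have orth: "cinner (ws ! i) (ws ! j) = 0 \<longleftrightarrow> i \<noteq> j" if "i < n" "j < n" for i j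
  proof -
    have "cinner (ws ! i) (ws ! j) = ws ! j \<bullet>c ws ! i"
      using ws that by (simp add: cinner_def scalar_prod_def ac_simps)
    then show ?thesis using corthogonalD[OF ws(2)] ws(3) that by auto
  qed
  have "(vec_norm u)^2 = 1" using u1 cinner_self[of u] by (metis of_real_eq_1_iff)
  moreover have "vec_norm u \<ge> 0" unfolding vec_norm_def by (simp add: sum_nonneg)
  ultimately have "vec_norm u = 1" by (simp add: power2_eq_1_iff)
  then have "col (mat n n (\<lambda>(i,j). (ws ! j) $ i / of_real (vec_norm (ws ! j)))) 0 = u"
    using n ws0 u by (intro eq_vecI) auto
  then show ?thesis using unitary_normalized_cols[OF ws(3,1) orth] by blast
qed

definition spectral_decomposition :: "nat \<Rightarrow> complex mat \<Rightarrow> complex mat \<Rightarrow> real list \<Rightarrow> bool" where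
  "spectral_decomposition m A W ls \<longleftrightarrow>
     unitary m W \<and> length ls = m \<and> A = W * diag_of (map complex_of_real ls) * adj W"

lemma unit_eigenvector: assumes A: "A \<in> carrier_mat n n" and n: "0 < n"
  obtains u lam where "u \<in> carrier_vec n" "cinner u u = 1" "A *\<^sub>v u = lam \<cdot>\<^sub>v u"
proof -
  from spectrum_non_empty[OF A] n obtain lam where "lam \<in> spectrum A" by auto
  then obtain v where "eigenvector A v lam" unfolding spectrum_def eigenvalue_def by auto
  then have v: "v \<in> carrier_vec n" "v \<noteq> 0\<^sub>v n" "A *\<^sub>v v = lam \<cdot>\<^sub>v v"
    using A unfolding eigenvector_def by auto
  define c where "c = 1 / complex_of_real (vec_norm v)"
  have vp: "vec_norm v > 0" using vec_norm_pos v by auto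
  have "cinner (c \<cdot>\<^sub>v v) (c \<cdot>\<^sub>v v) = cnj c * c * cinner v v"
    using v by (simp add: cinner_smult_left cinner_smult_right[of _ n])
  also have "\<dots> = 1" using vp unfolding c_def cinner_self by (simp add: power2_eq_square)
  finally show ?thesis using that[of "c \<cdot>\<^sub>v v" lam] v A
    by (simp add: mult_mat_vec smult_smult_assoc mult.commute)
qed

lemma hermitian_first_col_diag_ext:
  assumes B: "B \<in> carrier_mat (Suc m) (Suc m)" and hB: "adj B = B"
    and col: "col B 0 = lam \<cdot>\<^sub>v unit_vec (Suc m) 0"
  obtains r B' where "B' \<in> carrier_mat m m" "adj B' = B'" "B = diag_ext (complex_of_real r) B'"
proof -
  have B0: "B $$ (i,0) = (if i = 0 then lam else 0)" if "i < Suc m" for i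
    using arg_cong[OF col, of "\<lambda>v. v $ i"] B that by auto
  have lreal: "lam = of_real (Re lam)"
  proof -
    have "cnj lam = lam" using arg_cong[OF hB, of "\<lambda>X. X $$ (0,0)"] B B0[of 0] by simp
    then show ?thesis by (simp add: complex_eq_iff)
  qed
  have B0': "B $$ (0,j) = (if j = 0 then lam else 0)" if "j < Suc m" for j
  proof -
    have "B $$ (0,j) = cnj (B $$ (j,0))" using arg_cong[OF hB, of "\<lambda>X. X $$ (0,j)"] B that by simp
    then show ?thesis using B0[OF that] lreal by (metis complex_cnj_complex_of_real complex_cnj_zero)
  qed
  define B' where "B' = mat m m (\<lambda>(i,j). B $$ (Suc i, Suc j))"
  have B': "B' \<in> carrier_mat m m" unfolding B'_def by simp
  have "adj B' = B'"
  proof (rule eq_matI)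
    fix i j assume "i < dim_row B'" "j < dim_col B'"
    then have ij: "i < m" "j < m" using B' by auto
    have "B $$ (Suc i, Suc j) = cnj (B $$ (Suc j, Suc i))"
      using arg_cong[OF hB, of "\<lambda>X. X $$ (Suc i, Suc j)"] B ij by simp
    then show "adj B' $$ (i,j) = B' $$ (i,j)" using ij unfolding B'_def by simp
  qed (use B' in auto)
  moreover have "B = diag_ext (complex_of_real (Re lam)) B'"
    by (rule eq_matI) (use B B0 B0' lreal in \<open>auto simp: diag_ext_index B'_def\<close>)
  ultimately show ?thesis using that B' by blast
qed

lemma hermitian_deflation:
  assumes A: "A \<in> carrier_mat (Suc m) (Suc m)" and hA: "adj A = A"
  obtains U r B where "unitary (Suc m) U" "B \<in> carrier_mat m m" "adj B = B"
    "adj U * A * U = diag_ext (complex_of_real r) B"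
proof -
  obtain u lam where u: "u \<in> carrier_vec (Suc m)" "cinner u u = 1" "A *\<^sub>v u = lam \<cdot>\<^sub>v u"
    using unit_eigenvector[OF A] by blast
  from unitary_completion[OF u(1,2)] obtain U where U: "unitary (Suc m) U" "col U 0 = u" by auto
  have Uc: "U \<in> carrier_mat (Suc m) (Suc m)" "adj U * U = 1\<^sub>m (Suc m)" using U unfolding unitary_def by auto
  define B where "B = adj U * A * U"
  have B: "B \<in> carrier_mat (Suc m) (Suc m)" using Uc A B_def by auto
  have "adj B = adj U * (A * U)" unfolding B_def using Uc A hA by (simp add: adj_mult[of _ "Suc m" "Suc m" _ "Suc m"])
  then have hB: "adj B = B" unfolding B_def using Uc A by (simp add: assoc_mult_mat[of _ "Suc m" "Suc m" _ "Suc m" _ "Suc m"])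
  have "col B 0 = (adj U * A) *\<^sub>v col U 0" unfolding B_def using Uc A by (subst col_mult) auto
  also have "\<dots> = adj U *\<^sub>v (A *\<^sub>v u)" using Uc A u U(2) by (subst assoc_mult_mat_vec) auto
  also have "\<dots> = lam \<cdot>\<^sub>v (adj U *\<^sub>v col U 0)"
    using u Uc U(2) mult_mat_vec[of "adj U" "Suc m" "Suc m" u lam] by simp
  also have "adj U *\<^sub>v col U 0 = col (adj U * U) 0" using Uc by (subst col_mult) auto
  finally have "col B 0 = lam \<cdot>\<^sub>v unit_vec (Suc m) 0" using Uc by simp
  then show ?thesis using hermitian_first_col_diag_ext[OF B hB] that[OF U(1)] unfolding B_def by metis
qed

theorem hermitian_spectral_decomposition:
  "A \<in> carrier_mat m m \<Longrightarrow> adj A = A \<Longrightarrow> \<exists>W ls. spectral_decomposition m A W ls"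
proof (induction m arbitrary: A)
  case 0
  show ?case unfolding spectral_decomposition_def
    by (rule exI[of _ "1\<^sub>m 0"], rule exI[of _ "[]"])
      (use 0 in \<open>auto simp: unitary_def diag_of_def intro!: eq_matI\<close>)
next
  case (Suc m)
  note A = Suc.prems(1)
  obtain U r B where U: "unitary (Suc m) U" and B: "B \<in> carrier_mat m m" "adj B = B"
    and UAU: "adj U * A * U = diag_ext (complex_of_real r) B"
    using hermitian_deflation[OF Suc.prems] by blast
  from Suc.IH[OF B] obtain W' ls' where W': "unitary m W'" "length ls' = m"
    "B = W' * diag_of (map complex_of_real ls') * adj W'" unfolding spectral_decomposition_def by auto
  define D where "D = diag_of (map complex_of_real ls')"
  have D: "D \<in> carrier_mat m m" unfolding D_def using W' diag_of_carrier[of "map complex_of_real ls'"] by simp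
  have Uc: "U \<in> carrier_mat (Suc m) (Suc m)" and W'c: "W' \<in> carrier_mat m m" using U W' unitary_def by auto
  define W where "W = U * diag_ext 1 W'"
  have W: "unitary (Suc m) W" unfolding W_def by (rule unitary_mult[OF U unitary_diag_ext[OF W'(1)]])
  have ext: "diag_ext 1 W' \<in> carrier_mat (Suc m) (Suc m)" "diag_ext (complex_of_real r) D \<in> carrier_mat (Suc m) (Suc m)"
    "diag_ext 1 (adj W') \<in> carrier_mat (Suc m) (Suc m)" using W'c D by auto
  have "W * diag_of (map complex_of_real (r # ls')) * adj W
      = U * diag_ext 1 W' * diag_ext (complex_of_real r) D * (diag_ext 1 (adj W') * adj U)"
    unfolding W_def D_def using Uc W'c by (simp add: diag_of_Cons adj_mult[of _ "Suc m" "Suc m" _ "Suc m"] diag_ext_adj)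
  also have "\<dots> = U * (diag_ext 1 W' * diag_ext (complex_of_real r) D * diag_ext 1 (adj W')) * adj U"
    using Uc ext by (simp add: assoc_mult_mat[of _ "Suc m" "Suc m" _ "Suc m" _ "Suc m"])
  also have "diag_ext 1 W' * diag_ext (complex_of_real r) D * diag_ext 1 (adj W') = adj U * A * U"
    using W'c D W'(3) UAU unfolding D_def[symmetric] by (simp add: diag_ext_mult[of _ m m _ m])
  also have "U * (adj U * A * U) * adj U = A"
  proof -
    have "U * adj U = 1\<^sub>m (Suc m)" using U unfolding unitary_def by simp
    then show ?thesis using unitary_cancel(2)[OF U A] Uc A by (simp add: assoc_mult_mat[of _ "Suc m" "Suc m" _ "Suc m" _ "Suc m"])
  qed
  finally show ?case unfolding spectral_decomposition_def using W W'(2)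
    by (intro exI[of _ W] exI[of _ "r # ls'"]) auto
qed

lemma spectral_decompositionD:
  assumes "spectral_decomposition m A W ls"
  shows "unitary m W" "length ls = m" "A = W * diag_of (map complex_of_real ls) * adj W"
    "W \<in> carrier_mat m m" "A \<in> carrier_mat m m"
  using assms unfolding spectral_decomposition_def unitary_def by auto

lemma spectral_decomposition_adj: assumes "spectral_decomposition m A W ls" shows "adj A = A"
proof -
  note S = spectral_decompositionD[OF assms]
  define D where "D = diag_of (map complex_of_real ls)"
  have D: "D \<in> carrier_mat m m" "adj D = D" unfolding D_def using S(2)
    by (auto simp: diag_of_adj[of complex_of_real ls, simplified] o_def)
  have "adj A = W * (adj D * adj W)" unfolding S(3) D_def[symmetric] using S(4) D
    by (simp add: adj_mult[of _ m m _ m])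
  then show ?thesis unfolding S(3) D_def[symmetric] using S(4) D by (simp add: assoc_mult_mat[of _ m m _ m _ m])
qed

lemma mtrace_spectral_decomposition: assumes "spectral_decomposition m A W ls"
  shows "mtrace A = of_real (\<Sum>i<m. ls ! i)"
proof -
  note S = spectral_decompositionD[OF assms]
  have "mtrace A = mtrace (diag_of (map complex_of_real ls))"
    unfolding S(3) using mtrace_unitary_conj[OF S(1)] S(2) diag_of_carrier[of "map complex_of_real ls"] by simp
  then show ?thesis using S(2) by (simp add: mtrace_diag_of)
qed

lemma spectral_mult_vec: assumes S: "spectral_decomposition m A W ls" and v: "v \<in> carrier_vec m"
  defines "c \<equiv> adj W *\<^sub>v v"
  shows "A *\<^sub>v v = W *\<^sub>v vec m (\<lambda>i. complex_of_real (ls ! i) * c $ i)" "v = W *\<^sub>v c"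
proof -
  note S = spectral_decompositionD[OF S]
  have Wc: "W * adj W = 1\<^sub>m m" using S(1) unfolding unitary_def by auto
  have D: "diag_of (map complex_of_real ls) \<in> carrier_mat m m" using diag_of_carrier[of "map complex_of_real ls"] S(2) by simp
  have c: "c \<in> carrier_vec m" unfolding c_def using S(4) v by (metis adj_carrier mult_mat_vec_carrier)
  have "A *\<^sub>v v = (W * diag_of (map complex_of_real ls)) *\<^sub>v c"
    unfolding S(3) c_def using S(4) D v by (intro assoc_mult_mat_vec) auto
  also have "\<dots> = W *\<^sub>v (diag_of (map complex_of_real ls) *\<^sub>v c)"
    using S(4) D c by (intro assoc_mult_mat_vec) auto
  finally show "A *\<^sub>v v = W *\<^sub>v vec m (\<lambda>i. complex_of_real (ls ! i) * c $ i)"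
    using diag_of_mult_vec[OF S(2) c] by simp
  show "v = W *\<^sub>v c" unfolding c_def using S(4) Wc v
    by (subst assoc_mult_mat_vec[symmetric, of _ m m _ m]) auto
qed

lemma spectral_coordinates: assumes S: "spectral_decomposition m A W ls" and v: "v \<in> carrier_vec m"
  defines "c \<equiv> adj W *\<^sub>v v"
  shows "cinner v (A *\<^sub>v v) = of_real (\<Sum>i<m. ls ! i * (cmod (c $ i))^2)"
    "(vec_norm v)^2 = (\<Sum>i<m. (cmod (c $ i))^2)"
    "(vec_norm (A *\<^sub>v v))^2 = (\<Sum>i<m. (ls ! i)^2 * (cmod (c $ i))^2)"
proof -
  note SD = spectral_decompositionD[OF S]
  have cc: "c \<in> carrier_vec m" unfolding c_def using SD(4) v by (metis adj_carrier mult_mat_vec_carrier)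
  define c' where "c' = vec m (\<lambda>i. complex_of_real (ls ! i) * c $ i)"
  have c': "c' \<in> carrier_vec m" unfolding c'_def by simp
  have e1: "A *\<^sub>v v = W *\<^sub>v c'" unfolding c'_def c_def by (rule spectral_mult_vec(1)[OF S v])
  have e2: "v = W *\<^sub>v c" unfolding c_def by (rule spectral_mult_vec(2)[OF S v])
  have "cinner v (A *\<^sub>v v) = cinner (W *\<^sub>v c) (W *\<^sub>v c')" by (simp only: e1 e2[symmetric])
  also have "\<dots> = cinner c c'" using cinner_unitary[OF SD(1) cc c'] .
  also have "\<dots> = of_real (\<Sum>i<m. ls ! i * (cmod (c $ i))^2)"
    using cc unfolding cinner_def c'_def of_real_sum
    by (intro sum.cong) (auto simp: atLeast0LessThan complex_norm_square[symmetric] ac_simps)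
  finally show "cinner v (A *\<^sub>v v) = of_real (\<Sum>i<m. ls ! i * (cmod (c $ i))^2)" .
  have "of_real ((vec_norm v)^2) = cinner (W *\<^sub>v c) (W *\<^sub>v c)" by (simp only: cinner_self e2[symmetric])
  also have "\<dots> = cinner c c" using cinner_unitary[OF SD(1) cc cc] .
  also have "\<dots> = of_real (\<Sum>i<m. (cmod (c $ i))^2)"
    using cc unfolding cinner_def of_real_sum
    by (intro sum.cong) (auto simp: atLeast0LessThan complex_norm_square[symmetric] ac_simps)
  finally show "(vec_norm v)^2 = (\<Sum>i<m. (cmod (c $ i))^2)" by (simp only: of_real_eq_iff)
  have "of_real ((vec_norm (A *\<^sub>v v))^2) = cinner (W *\<^sub>v c') (W *\<^sub>v c')" by (simp only: cinner_self e1)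
  also have "\<dots> = cinner c' c'" using cinner_unitary[OF SD(1) c' c'] .
  also have "\<dots> = of_real (\<Sum>i<m. (ls ! i)^2 * (cmod (c $ i))^2)"
    using cc unfolding cinner_def c'_def of_real_sum
    by (intro sum.cong) (auto simp: atLeast0LessThan complex_norm_square[symmetric] power2_eq_square ac_simps)
  finally show "(vec_norm (A *\<^sub>v v))^2 = (\<Sum>i<m. (ls ! i)^2 * (cmod (c $ i))^2)" by (simp only: of_real_eq_iff)
qed

lemma spectral_form_real: assumes "spectral_decomposition m A W ls" "v \<in> carrier_vec m"
  shows "cinner v (A *\<^sub>v v) = of_real (Re (cinner v (A *\<^sub>v v)))"
  using spectral_coordinates(1)[OF assms] by simp

lemma spectral_form_ge: assumes S: "spectral_decomposition m A W ls" and v: "v \<in> carrier_vec m"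
  and lo: "\<forall>x\<in>set ls. lo \<le> x"
  shows "lo * (vec_norm v)^2 \<le> Re (cinner v (A *\<^sub>v v))"
  unfolding spectral_coordinates[OF S v] sum_distrib_left Re_complex_of_real
  using lo spectral_decompositionD(2)[OF S] by (intro sum_mono mult_right_mono) auto

lemma spectral_form_le: assumes S: "spectral_decomposition m A W ls" and v: "v \<in> carrier_vec m"
  and hi: "\<forall>x\<in>set ls. x \<le> hi"
  shows "Re (cinner v (A *\<^sub>v v)) \<le> hi * (vec_norm v)^2"
  unfolding spectral_coordinates[OF S v] sum_distrib_left Re_complex_of_real
  using hi spectral_decompositionD(2)[OF S] by (intro sum_mono mult_right_mono) auto

lemma spectral_norm_le: assumes S: "spectral_decomposition m A W ls" and v: "v \<in> carrier_vec m"
  and le1: "\<forall>x\<in>set ls. \<bar>x\<bar> \<le> 1"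
  shows "(vec_norm (A *\<^sub>v v))^2 \<le> (vec_norm v)^2"
  unfolding spectral_coordinates[OF S v]
proof (rule sum_mono)
  fix i assume "i \<in> {..<m}"
  then have "\<bar>ls ! i\<bar> \<le> 1" using le1 spectral_decompositionD(2)[OF S] by auto
  then have "(ls ! i)^2 \<le> 1" using abs_square_le_1 by blast
  then show "(ls ! i)^2 * (cmod ((adj W *\<^sub>v v) $ i))^2 \<le> (cmod ((adj W *\<^sub>v v) $ i))^2"
    using mult_right_mono[of "(ls ! i)^2" 1] by simp
qed

text \<open>Equality in the bound \<open>\<langle>v, A v\<rangle> \<le> \<parallel>v\<parallel>\<^sup>2\<close> forces every coordinate of \<open>v\<close> to sit
  on the eigenvalue 1.\<close>

lemma spectral_form_eq_fixed: assumes S: "spectral_decomposition m A W ls" and v: "v \<in> carrier_vec m"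
  and le1: "\<forall>x\<in>set ls. x \<le> 1" and eq: "Re (cinner v (A *\<^sub>v v)) = (vec_norm v)^2"
  shows "A *\<^sub>v v = v"
proof -
  define c where "c = adj W *\<^sub>v v"
  note SD = spectral_decompositionD[OF S]
  have cc: "c \<in> carrier_vec m" unfolding c_def using SD(4) v by (metis adj_carrier mult_mat_vec_carrier)
  have "(\<Sum>i<m. ls ! i * (cmod (c $ i))^2) = (\<Sum>i<m. (cmod (c $ i))^2)"
    using eq unfolding spectral_coordinates[OF S v, folded c_def] by simp
  then have "(\<Sum>i<m. (1 - ls ! i) * (cmod (c $ i))^2) = 0"
    by (simp add: algebra_simps sum_subtractf)
  moreover have "\<forall>i\<in>{..<m}. 0 \<le> (1 - ls ! i) * (cmod (c $ i))^2"
    using le1 SD(2) by auto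
  ultimately have z: "\<forall>i\<in>{..<m}. (1 - ls ! i) * (cmod (c $ i))^2 = 0"
    by (subst sum_nonneg_eq_0_iff[symmetric]) auto
  have "vec m (\<lambda>i. complex_of_real (ls ! i) * c $ i) = c"
  proof (rule eq_vecI)
    fix i assume "i < dim_vec c"
    then have i: "i < m" using cc by simp
    then have "ls ! i = 1 \<or> c $ i = 0" using z by auto
    then show "vec m (\<lambda>i. complex_of_real (ls ! i) * c $ i) $ i = c $ i" using i by auto
  qed (use cc in simp)
  then show ?thesis using spectral_mult_vec[OF S v, folded c_def] by simp
qed

lemma spectral_eigenvector: assumes S: "spectral_decomposition m A W ls" and k: "k < m"
  shows "A *\<^sub>v col W k = complex_of_real (ls ! k) \<cdot>\<^sub>v col W k" "cinner (col W k) (col W k) = 1"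
proof -
  note SD = spectral_decompositionD[OF S]
  have Wc: "adj W * W = 1\<^sub>m m" using SD(1) unfolding unitary_def by auto
  define D where "D = diag_of (map complex_of_real ls)"
  have D: "D \<in> carrier_mat m m" unfolding D_def using SD(2) diag_of_carrier[of "map complex_of_real ls"] by simp
  have AW: "A * W = W * D"
  proof -
    have "A * W = W * D * (adj W * W)" unfolding SD(3) D_def[symmetric] using SD(4) D
      by (intro assoc_mult_mat[of "W * D" m m "adj W" m W m]) auto
    then show ?thesis using SD(4) D Wc by simp
  qed
  have colD: "col D k = complex_of_real (ls ! k) \<cdot>\<^sub>v unit_vec m k"
    using k SD(2) unfolding D_def by (intro eq_vecI) (auto simp: diag_of_def)
  have "A *\<^sub>v col W k = col (A * W) k" using col_mult2[of A m m W m k] SD(4,5) k by simp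
  also have "\<dots> = W *\<^sub>v col D k" unfolding AW using col_mult2[of W m m D m k] SD(4) D k by simp
  also have "\<dots> = complex_of_real (ls ! k) \<cdot>\<^sub>v (W *\<^sub>v unit_vec m k)"
    unfolding colD using SD(4) by (simp add: mult_mat_vec[of _ m m])
  also have "W *\<^sub>v unit_vec m k = col W k" using SD(4) k by (intro eq_vecI) (auto simp: col_def)
  finally show "A *\<^sub>v col W k = complex_of_real (ls ! k) \<cdot>\<^sub>v col W k" .
  show "cinner (col W k) (col W k) = 1"
    using adj_mult_index[OF SD(4) SD(4) k k] Wc k by simp
qed

section \<open>Kraus representations and the dual channel\<close>

lemma msum_Nil[simp]: "msum d [] = 0\<^sub>m d d" by (simp add: msum_def)
lemma msum_Cons[simp]: "msum d (x # xs) = x + msum d xs" by (simp add: msum_def)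

lemma msum_dim[simp]: "dim_row (msum d xs) = d" "dim_col (msum d xs) = d"
  by (induction xs) auto

lemma msum_carrier[simp]: "(\<forall>x\<in>set xs. x \<in> carrier_mat d d) \<Longrightarrow> msum d xs \<in> carrier_mat d d"
  by (induction xs) auto

lemma msum_index: "(\<forall>x\<in>set xs. x \<in> carrier_mat d d) \<Longrightarrow> i < d \<Longrightarrow> j < d \<Longrightarrow>
   msum d xs $$ (i,j) = (\<Sum>x\<leftarrow>xs. x $$ (i,j))"
  by (induction xs) auto

lemma msum_append: "(\<forall>x\<in>set xs. x \<in> carrier_mat d d) \<Longrightarrow> (\<forall>x\<in>set ys. x \<in> carrier_mat d d) \<Longrightarrow>
   msum d (xs @ ys) = msum d xs + msum d ys"
  by (induction xs) (auto simp: assoc_add_mat)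

lemma msum_concat: "(\<forall>xs\<in>set xss. \<forall>x\<in>set xs. x \<in> carrier_mat d d) \<Longrightarrow>
   msum d (concat xss) = msum d (map (msum d) xss)"
  by (induction xss) (auto simp: msum_append)

lemma msum_mult_left: "B \<in> carrier_mat d d \<Longrightarrow> (\<forall>x\<in>set xs. x \<in> carrier_mat d d) \<Longrightarrow>
   B * msum d xs = msum d (map (\<lambda>x. B * x) xs)"
  by (induction xs) (auto simp: mult_add_distrib_mat)

lemma msum_mult_right: "B \<in> carrier_mat d d \<Longrightarrow> (\<forall>x\<in>set xs. x \<in> carrier_mat d d) \<Longrightarrow>
   msum d xs * B = msum d (map (\<lambda>x. x * B) xs)"
  by (induction xs) (auto simp: add_mult_distrib_mat)

lemma msum_adj: "(\<forall>x\<in>set xs. x \<in> carrier_mat d d) \<Longrightarrow> adj (msum d xs) = msum d (map adj xs)"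
  by (induction xs) (auto simp: adj_add)

lemma msum_cong: "(\<And>x. x \<in> set xs \<Longrightarrow> f x = g x) \<Longrightarrow> msum d (map f xs) = msum d (map g xs)"
  by (metis map_eq_conv)

lemma sum_list_swap: "(\<Sum>a\<leftarrow>A. \<Sum>b\<leftarrow>B. (g a b :: 'a :: comm_monoid_add)) = (\<Sum>b\<leftarrow>B. \<Sum>a\<leftarrow>A. g a b)"
  by (induction A) (auto simp: sum_list_addf)

lemma msum_swap: assumes "\<And>a b. a \<in> set A \<Longrightarrow> b \<in> set B \<Longrightarrow> f a b \<in> carrier_mat d d"
  shows "msum d (map (\<lambda>a. msum d (map (f a) B)) A) = msum d (map (\<lambda>b. msum d (map (\<lambda>a. f a b) A)) B)"
proof (rule eq_matI)
  fix i j assume ij: "i < dim_row (msum d (map (\<lambda>b. msum d (map (\<lambda>a. f a b) A)) B))"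
    "j < dim_col (msum d (map (\<lambda>b. msum d (map (\<lambda>a. f a b) A)) B))"
  then have ij: "i < d" "j < d" using assms by auto
  show "msum d (map (\<lambda>a. msum d (map (f a) B)) A) $$ (i,j) = msum d (map (\<lambda>b. msum d (map (\<lambda>a. f a b) A)) B) $$ (i,j)"
  proof -
    have "msum d (map (\<lambda>a. msum d (map (f a) B)) A) $$ (i,j) = (\<Sum>a\<leftarrow>A. \<Sum>b\<leftarrow>B. f a b $$ (i,j))"
      using assms ij by (simp add: msum_index o_def cong: map_cong)
    also have "\<dots> = (\<Sum>b\<leftarrow>B. \<Sum>a\<leftarrow>A. f a b $$ (i,j))" by (rule sum_list_swap)
    also have "\<dots> = msum d (map (\<lambda>b. msum d (map (\<lambda>a. f a b) A)) B) $$ (i,j)"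
      using assms ij by (simp add: msum_index o_def cong: map_cong)
    finally show ?thesis .
  qed
qed (use assms in auto)

lemma mtrace_msum: "(\<forall>x\<in>set xs. x \<in> carrier_mat d d) \<Longrightarrow> mtrace (msum d xs) = (\<Sum>x\<leftarrow>xs. mtrace x)"
  by (induction xs) (auto simp: mtrace_add mtrace_def)

definition kraus_dual :: "nat \<Rightarrow> complex mat list \<Rightarrow> complex mat \<Rightarrow> complex mat" where
  "kraus_dual d Ks B = msum d (map (\<lambda>K. adj K * B * K) Ks)"

lemma kraus_repD: assumes "kraus_rep d Ks T"
  shows "\<And>K. K \<in> set Ks \<Longrightarrow> K \<in> carrier_mat d d" "msum d (map (\<lambda>K. adj K * K) Ks) = 1\<^sub>m d"
    "\<And>X. X \<in> carrier_mat d d \<Longrightarrow> T X = msum d (map (\<lambda>K. K * X * adj K) Ks)"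
  using assms unfolding kraus_rep_def by auto

lemma kraus_rep_carrier: assumes "kraus_rep d Ks T" "X \<in> carrier_mat d d" shows "T X \<in> carrier_mat d d"
  using kraus_repD[OF assms(1)] assms(2) by (auto intro!: msum_carrier)

lemma kraus_dual_carrier: assumes "\<And>K. K \<in> set Ks \<Longrightarrow> K \<in> carrier_mat d d" "B \<in> carrier_mat d d"
  shows "kraus_dual d Ks B \<in> carrier_mat d d"
  using assms unfolding kraus_dual_def by (auto intro!: msum_carrier)

lemma mtrace_sandwich_cycle: assumes "B \<in> carrier_mat d d" "K \<in> carrier_mat d d" "X \<in> carrier_mat d d"
  shows "mtrace (B * (K * X * adj K)) = mtrace (adj K * B * K * X)"
proof -
  have "B * (K * X * adj K) = (B * K * X) * adj K" using assms by (simp add: assoc_mult_mat[of _ d d _ d _ d])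
  then have "mtrace (B * (K * X * adj K)) = mtrace (adj K * (B * K * X))"
    using mtrace_comm[of "B * K * X" d d "adj K"] assms by simp
  also have "adj K * (B * K * X) = adj K * B * K * X" using assms by (simp add: assoc_mult_mat[of _ d d _ d _ d])
  finally show ?thesis .
qed

lemma mtrace_kraus_dual: assumes T: "kraus_rep d Ks T" and X: "X \<in> carrier_mat d d" and B: "B \<in> carrier_mat d d"
  shows "mtrace (B * T X) = mtrace (kraus_dual d Ks B * X)"
proof -
  note K = kraus_repD[OF T]
  have "B * T X = msum d (map (\<lambda>K. B * (K * X * adj K)) Ks)"
    unfolding K(3)[OF X] using B K X by (subst msum_mult_left) (auto simp: o_def)
  then have "mtrace (B * T X) = (\<Sum>K\<leftarrow>Ks. mtrace (B * (K * X * adj K)))"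
    using K X B by (simp add: mtrace_msum o_def)
  also have "\<dots> = (\<Sum>K\<leftarrow>Ks. mtrace (adj K * B * K * X))"
    using K X B mtrace_sandwich_cycle by (intro arg_cong[where f=sum_list] map_cong) auto
  also have "\<dots> = mtrace (kraus_dual d Ks B * X)"
  proof -
    have "kraus_dual d Ks B * X = msum d (map (\<lambda>K. adj K * B * K * X) Ks)"
      unfolding kraus_dual_def using B K X by (subst msum_mult_right) (auto simp: o_def)
    then show ?thesis using K X B by (simp add: mtrace_msum o_def)
  qed
  finally show ?thesis .
qed

lemma kraus_dual_one: assumes "kraus_rep d Ks T" shows "kraus_dual d Ks (1\<^sub>m d) = 1\<^sub>m d"
proof -
  note K = kraus_repD[OF assms]
  have "kraus_dual d Ks (1\<^sub>m d) = msum d (map (\<lambda>K. adj K * K) Ks)"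
    unfolding kraus_dual_def using K by (intro msum_cong) (simp add: right_mult_one_mat[of _ d d])
  then show ?thesis using K by simp
qed

lemma kraus_rep_adj: assumes T: "kraus_rep d Ks T" and X: "X \<in> carrier_mat d d"
  shows "T (adj X) = adj (T X)"
proof -
  note K = kraus_repD[OF T]
  have "adj (T X) = msum d (map (\<lambda>K. adj (K * X * adj K)) Ks)"
    unfolding K(3)[OF X] using K X by (subst msum_adj) (auto simp: o_def)
  also have "\<dots> = msum d (map (\<lambda>K. K * adj X * adj K) Ks)"
    using K X by (intro msum_cong) (simp add: adj_mult[of _ d d _ d] assoc_mult_mat[of _ d d _ d _ d])
  also have "\<dots> = T (adj X)" using K X by simp
  finally show ?thesis by simp
qed

lemma kraus_dual_adj: assumes K: "\<And>K. K \<in> set Ks \<Longrightarrow> K \<in> carrier_mat d d" and X: "X \<in> carrier_mat d d"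
  shows "kraus_dual d Ks (adj X) = adj (kraus_dual d Ks X)"
proof -
  have "adj (kraus_dual d Ks X) = msum d (map (\<lambda>K. adj (adj K * X * K)) Ks)"
    unfolding kraus_dual_def using K X by (subst msum_adj) (auto simp: o_def)
  also have "\<dots> = msum d (map (\<lambda>K. adj K * adj X * K) Ks)"
    using K X by (intro msum_cong) (simp add: adj_mult[of _ d d _ d] assoc_mult_mat[of _ d d _ d _ d])
  finally show ?thesis by (simp add: kraus_dual_def)
qed

lemma kraus_dual_form: assumes K: "\<And>K. K \<in> set Ks \<Longrightarrow> K \<in> carrier_mat d d" and B: "B \<in> carrier_mat d d"
  and v: "v \<in> carrier_vec d"
  shows "cinner v (kraus_dual d Ks B *\<^sub>v v) = (\<Sum>K\<leftarrow>Ks. cinner (K *\<^sub>v v) (B *\<^sub>v (K *\<^sub>v v)))"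
  using K
proof (induction Ks)
  case Nil
  then show ?case using v by (simp add: kraus_dual_def cinner_def)
next
  case (Cons K Ks)
  have Kc: "K \<in> carrier_mat d d" using Cons by auto
  have IH: "cinner v (kraus_dual d Ks B *\<^sub>v v) = (\<Sum>K\<leftarrow>Ks. cinner (K *\<^sub>v v) (B *\<^sub>v (K *\<^sub>v v)))" using Cons by auto
  have c: "kraus_dual d Ks B \<in> carrier_mat d d" using kraus_dual_carrier[of Ks d B] Cons B by auto
  have "kraus_dual d (K # Ks) B = adj K * B * K + kraus_dual d Ks B" by (simp add: kraus_dual_def)
  then have "kraus_dual d (K # Ks) B *\<^sub>v v = (adj K * B * K) *\<^sub>v v + kraus_dual d Ks B *\<^sub>v v"
    using Kc B c v by (simp add: add_mult_distrib_mat_vec[of _ d d])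
  then have "cinner v (kraus_dual d (K # Ks) B *\<^sub>v v) = cinner v ((adj K * B * K) *\<^sub>v v) + cinner v (kraus_dual d Ks B *\<^sub>v v)"
    using Kc B c v by (simp add: cinner_add_right[of _ d])
  also have "(adj K * B * K) *\<^sub>v v = adj K *\<^sub>v (B *\<^sub>v (K *\<^sub>v v))"
    using Kc B v by (simp add: assoc_mult_mat_vec[of _ d d _ d])
  also have "cinner v (adj K *\<^sub>v (B *\<^sub>v (K *\<^sub>v v))) = cinner (K *\<^sub>v v) (B *\<^sub>v (K *\<^sub>v v))"
    using cinner_adj[of "adj K" d d v "B *\<^sub>v (K *\<^sub>v v)"] Kc B v by simp
  finally show ?case using IH by simp
qed

lemma channel_dual_kraus: assumes "quantum_channel d T"
  obtains Ks where "kraus_rep d Ks T" "channel_dual d T = kraus_dual d Ks"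
proof
  show "kraus_rep d (SOME Ks. kraus_rep d Ks T) T" using assms unfolding quantum_channel_def by (rule someI_ex)
qed (auto simp: channel_dual_def kraus_dual_def)

definition kraus_prod :: "complex mat list \<Rightarrow> complex mat list \<Rightarrow> complex mat list" where
  "kraus_prod Ks1 Ks2 = concat (map (\<lambda>K1. map (\<lambda>K2. K1 * K2) Ks2) Ks1)"

lemma kraus_prod_complete: assumes T1: "kraus_rep d Ks1 T1" and T2: "kraus_rep d Ks2 T2"
  shows "msum d (map (\<lambda>K. adj K * K) (kraus_prod Ks1 Ks2)) = 1\<^sub>m d"
proof -
  note K1 = kraus_repD[OF T1] and K2 = kraus_repD[OF T2]
  have "msum d (map (\<lambda>K. adj K * K) (kraus_prod Ks1 Ks2))
      = msum d (map (\<lambda>a. msum d (map (\<lambda>b. adj b * (adj a * a) * b) Ks2)) Ks1)"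
    unfolding kraus_prod_def map_concat using K1 K2
    by (subst msum_concat) (auto simp: o_def adj_mult[of _ d d _ d] assoc_mult_mat[of _ d d _ d _ d] intro!: msum_cong)
  also have "\<dots> = msum d (map (\<lambda>b. msum d (map (\<lambda>a. adj b * (adj a * a) * b) Ks1)) Ks2)"
    using K1 K2 by (intro msum_swap) auto
  also have "\<dots> = msum d (map (\<lambda>b. adj b * b) Ks2)"
  proof (intro msum_cong)
    fix b assume b: "b \<in> set Ks2"
    have "msum d (map (\<lambda>a. adj b * (adj a * a) * b) Ks1) = msum d (map (\<lambda>a. adj b * (adj a * a)) Ks1) * b"
      using K1 K2 b by (subst msum_mult_right) (auto simp: o_def)
    also have "msum d (map (\<lambda>a. adj b * (adj a * a)) Ks1) = adj b * msum d (map (\<lambda>a. adj a * a) Ks1)"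
      using K1 K2 b by (subst msum_mult_left) (auto simp: o_def)
    finally show "msum d (map (\<lambda>a. adj b * (adj a * a) * b) Ks1) = adj b * b" using K1 K2 b
      by (simp add: right_mult_one_mat[of _ d d])
  qed
  also have "\<dots> = 1\<^sub>m d" using K2 by simp
  finally show ?thesis .
qed

lemma kraus_prod_apply: assumes T1: "kraus_rep d Ks1 T1" and T2: "kraus_rep d Ks2 T2"
  and X: "X \<in> carrier_mat d d"
  shows "T1 (T2 X) = msum d (map (\<lambda>K. K * X * adj K) (kraus_prod Ks1 Ks2))"
proof -
  note K1 = kraus_repD[OF T1] and K2 = kraus_repD[OF T2]
  have "T1 (T2 X) = msum d (map (\<lambda>a. a * msum d (map (\<lambda>b. b * X * adj b) Ks2) * adj a) Ks1)"
    using K1(3)[OF kraus_rep_carrier[OF T2 X]] K2(3)[OF X] by simp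
  also have "\<dots> = msum d (map (\<lambda>a. msum d (map (\<lambda>b. a * b * X * adj (a * b)) Ks2)) Ks1)"
  proof (intro msum_cong)
    fix a assume a: "a \<in> set Ks1"
    have "a * msum d (map (\<lambda>b. b * X * adj b) Ks2) * adj a = msum d (map (\<lambda>b. a * (b * X * adj b)) Ks2) * adj a"
      using K1 K2 a X by (subst msum_mult_left) (auto simp: o_def)
    also have "\<dots> = msum d (map (\<lambda>b. a * (b * X * adj b) * adj a) Ks2)"
      using K1 K2 a X by (subst msum_mult_right) (auto simp: o_def)
    also have "\<dots> = msum d (map (\<lambda>b. a * b * X * adj (a * b)) Ks2)"
      using K1 K2 a X by (intro msum_cong) (simp add: adj_mult[of _ d d _ d] assoc_mult_mat[of _ d d _ d _ d])
    finally show "a * msum d (map (\<lambda>b. b * X * adj b) Ks2) * adj a = msum d (map (\<lambda>b. a * b * X * adj (a * b)) Ks2)" .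
  qed
  also have "\<dots> = msum d (map (\<lambda>K. K * X * adj K) (kraus_prod Ks1 Ks2))"
    unfolding kraus_prod_def map_concat using K1 K2 X by (subst msum_concat) (auto simp: o_def)
  finally show ?thesis .
qed

lemma kraus_rep_comp: assumes T1: "kraus_rep d Ks1 T1" and T2: "kraus_rep d Ks2 T2"
  shows "kraus_rep d (kraus_prod Ks1 Ks2) (T1 \<circ> T2)"
  using kraus_prod_complete[OF T1 T2] kraus_prod_apply[OF T1 T2] kraus_repD(1)[OF T1] kraus_repD(1)[OF T2]
  unfolding kraus_rep_def kraus_prod_def by auto

lemma quantum_channel_comp: "quantum_channel d T1 \<Longrightarrow> quantum_channel d T2 \<Longrightarrow> quantum_channel d (T1 \<circ> T2)"
  unfolding quantum_channel_def using kraus_rep_comp by blast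

lemma channel_dual_carrier: assumes "quantum_channel d T" "B \<in> carrier_mat d d"
  shows "channel_dual d T B \<in> carrier_mat d d"
proof -
  obtain Ks where "kraus_rep d Ks T" "channel_dual d T = kraus_dual d Ks" using channel_dual_kraus[OF assms(1)] .
  then show ?thesis using kraus_dual_carrier[OF kraus_repD(1) assms(2)] by simp
qed

lemma mtrace_channel_dual: assumes "quantum_channel d T" "X \<in> carrier_mat d d" "B \<in> carrier_mat d d"
  shows "mtrace (B * T X) = mtrace (channel_dual d T B * X)"
proof -
  obtain Ks where "kraus_rep d Ks T" "channel_dual d T = kraus_dual d Ks" using channel_dual_kraus[OF assms(1)] .
  then show ?thesis using mtrace_kraus_dual assms(2,3) by simp
qed

lemma channel_dual_comp: assumes T1: "quantum_channel d T1" and T2: "quantum_channel d T2"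
  and B: "B \<in> carrier_mat d d"
  shows "channel_dual d (T1 \<circ> T2) B = channel_dual d T2 (channel_dual d T1 B)"
proof (rule mtrace_mult_eqI)
  note T = quantum_channel_comp[OF T1 T2]
  have D1: "channel_dual d T1 B \<in> carrier_mat d d" using channel_dual_carrier[OF T1 B] .
  show "channel_dual d (T1 \<circ> T2) B \<in> carrier_mat d d" using channel_dual_carrier[OF T B] .
  show "channel_dual d T2 (channel_dual d T1 B) \<in> carrier_mat d d" using channel_dual_carrier[OF T2 D1] .
  fix X :: "complex mat" assume X: "X \<in> carrier_mat d d"
  have T2X: "T2 X \<in> carrier_mat d d"
    using T2 kraus_rep_carrier[OF _ X] unfolding quantum_channel_def by blast
  have "mtrace (channel_dual d (T1 \<circ> T2) B * X) = mtrace (B * T1 (T2 X))"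
    using mtrace_channel_dual[OF T X B] by simp
  also have "\<dots> = mtrace (channel_dual d T1 B * T2 X)" using mtrace_channel_dual[OF T1 T2X B] .
  also have "\<dots> = mtrace (channel_dual d T2 (channel_dual d T1 B) * X)" using mtrace_channel_dual[OF T2 X D1] .
  finally show "mtrace (channel_dual d (T1 \<circ> T2) B * X) = mtrace (channel_dual d T2 (channel_dual d T1 B) * X)" .
qed

lemma channel_dual_sandwich: assumes M: "quantum_channel d M" and N: "quantum_channel d N" and B: "B \<in> carrier_mat d d"
  shows "channel_dual d (M \<circ> N \<circ> M) B = channel_dual d M (channel_dual d N (channel_dual d M B))"
  using channel_dual_comp[OF quantum_channel_comp[OF M N] M B] channel_dual_comp[OF M N B] by simp

theorem detailed_balance_sandwich: assumes M: "quantum_channel d M" "detailed_balance d \<rho> s M"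
  and N: "quantum_channel d N" "detailed_balance d \<rho> s N"
  shows "detailed_balance d \<rho> s (M \<circ> N \<circ> M)"
  unfolding detailed_balance_def
proof (intro ballI)
  fix A B :: "complex mat" assume A: "A \<in> carrier_mat d d" and B: "B \<in> carrier_mat d d"
  let ?M = "channel_dual d M" and ?N = "channel_dual d N"
  have c: "\<And>X. X \<in> carrier_mat d d \<Longrightarrow> ?M X \<in> carrier_mat d d" "\<And>X. X \<in> carrier_mat d d \<Longrightarrow> ?N X \<in> carrier_mat d d"
    using channel_dual_carrier M(1) N(1) by auto
  have dbM: "\<And>X Y. X \<in> carrier_mat d d \<Longrightarrow> Y \<in> carrier_mat d d \<Longrightarrow> s_inner \<rho> s X (?M Y) = s_inner \<rho> s (?M X) Y"
    using M(2) unfolding detailed_balance_def by auto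
  have dbN: "\<And>X Y. X \<in> carrier_mat d d \<Longrightarrow> Y \<in> carrier_mat d d \<Longrightarrow> s_inner \<rho> s X (?N Y) = s_inner \<rho> s (?N X) Y"
    using N(2) unfolding detailed_balance_def by auto
  have "s_inner \<rho> s A (channel_dual d (M \<circ> N \<circ> M) B) = s_inner \<rho> s A (?M (?N (?M B)))"
    using channel_dual_sandwich[OF M(1) N(1) B] by simp
  also have "\<dots> = s_inner \<rho> s (?M A) (?N (?M B))" using dbM A c B by simp
  also have "\<dots> = s_inner \<rho> s (?N (?M A)) (?M B)" using dbN A c B by simp
  also have "\<dots> = s_inner \<rho> s (?M (?N (?M A))) B" using dbM A c B by simp
  also have "\<dots> = s_inner \<rho> s (channel_dual d (M \<circ> N \<circ> M) A) B"
    using channel_dual_sandwich[OF M(1) N(1) A] by simp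
  finally show "s_inner \<rho> s A (channel_dual d (M \<circ> N \<circ> M) B) = s_inner \<rho> s (channel_dual d (M \<circ> N \<circ> M) A) B" .
qed

section \<open>Functional calculus and the Gibbs state\<close>

definition spectral_fun :: "complex mat \<Rightarrow> real list \<Rightarrow> (real \<Rightarrow> real) \<Rightarrow> complex mat" where
  "spectral_fun V \<mu> g = V * diag_of (map (\<lambda>x. complex_of_real (g x)) \<mu>) * adj V"

lemma spectral_fun_id: "spectral_decomposition m A V \<mu> \<Longrightarrow> spectral_fun V \<mu> (\<lambda>x. x) = A"
  by (simp add: spectral_fun_def spectral_decomposition_def)

lemma spectral_fun_carrier[simp]: "unitary d V \<Longrightarrow> length \<mu> = d \<Longrightarrow> spectral_fun V \<mu> g \<in> carrier_mat d d"
  unfolding spectral_fun_def unitary_def using diag_of_carrier[of "map (\<lambda>x. complex_of_real (g x)) \<mu>"] by auto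

lemma spectral_fun_decomposition: "unitary d V \<Longrightarrow> length \<mu> = d \<Longrightarrow>
    spectral_decomposition d (spectral_fun V \<mu> g) V (map g \<mu>)"
  by (simp add: spectral_fun_def spectral_decomposition_def o_def)

lemma spectral_fun_mult: assumes V: "unitary d V" and l: "length \<mu> = d"
  shows "spectral_fun V \<mu> g * spectral_fun V \<mu> h = spectral_fun V \<mu> (\<lambda>x. g x * h x)"
proof -
  have Vc: "V \<in> carrier_mat d d" using V unitary_def by auto
  define D1 where "D1 = diag_of (map (\<lambda>x. complex_of_real (g x)) \<mu>)"
  define D2 where "D2 = diag_of (map (\<lambda>x. complex_of_real (h x)) \<mu>)"
  have D: "D1 \<in> carrier_mat d d" "D2 \<in> carrier_mat d d" unfolding D1_def D2_def using l
    diag_of_carrier[of "map (\<lambda>x. complex_of_real (g x)) \<mu>"] diag_of_carrier[of "map (\<lambda>x. complex_of_real (h x)) \<mu>"] by auto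
  have "spectral_fun V \<mu> g * spectral_fun V \<mu> h = V * (D1 * (adj V * (V * (D2 * adj V))))"
    unfolding spectral_fun_def D1_def[symmetric] D2_def[symmetric] using Vc D
    by (simp add: assoc_mult_mat[of _ d d _ d _ d])
  also have "adj V * (V * (D2 * adj V)) = D2 * adj V" using unitary_cancel(1)[OF V, of "D2 * adj V" d] Vc D by simp
  also have "V * (D1 * (D2 * adj V)) = V * (D1 * D2) * adj V" using Vc D by (simp add: assoc_mult_mat[of _ d d _ d _ d])
  also have "D1 * D2 = diag_of (map (\<lambda>x. complex_of_real (g x * h x)) \<mu>)"
    unfolding D1_def D2_def diag_of_mult by simp
  finally show ?thesis unfolding spectral_fun_def .
qed

lemma spectral_fun_adj: "unitary d V \<Longrightarrow> length \<mu> = d \<Longrightarrow> adj (spectral_fun V \<mu> g) = spectral_fun V \<mu> g"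
  using spectral_decomposition_adj[OF spectral_fun_decomposition] by blast

lemma spectral_fun_cong: "(\<And>x. x \<in> set \<mu> \<Longrightarrow> g x = h x) \<Longrightarrow> spectral_fun V \<mu> g = spectral_fun V \<mu> h"
  unfolding spectral_fun_def by (metis (mono_tags, lifting) map_eq_conv)

lemma spectral_fun_one: assumes V: "unitary d V" and l: "length \<mu> = d" shows "spectral_fun V \<mu> (\<lambda>x. 1) = 1\<^sub>m d"
proof -
  have "diag_of (map (\<lambda>x. complex_of_real 1) \<mu>) = 1\<^sub>m d" using diag_of_one[of \<mu>] l by simp
  then show ?thesis unfolding spectral_fun_def using V unfolding unitary_def by (metis right_mult_one_mat)
qed

lemma mat_fun_spectral: assumes A: "A \<in> carrier_mat d d" and hA: "adj A = A"
  obtains U ls where "spectral_decomposition d A U ls" "\<And>f. mat_fun f A = spectral_fun U ls f"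
proof -
  define P where "P = (\<lambda>(U, ls). spectral_decomposition d A U ls)"
  have ex: "\<exists>p. P p" using hermitian_spectral_decomposition[OF A hA] unfolding P_def by auto
  obtain U ls where p: "(SOME p. P p) = (U, ls)" by (cases "SOME p. P p") auto
  have "P (U, ls)" using someI_ex[OF ex] p by simp
  moreover have "mat_fun f A = spectral_fun U ls f" for f
    unfolding mat_fun_def Let_def spectral_fun_def using A p unfolding P_def spectral_decomposition_def by simp
  ultimately show ?thesis using that unfolding P_def by auto
qed

lemma spectral_decomposition_lower_bound:
  assumes S: "spectral_decomposition m A W ls" and S': "spectral_decomposition m A V \<mu>"
    and lo: "\<forall>x\<in>set ls. lo \<le> x"
  shows "\<forall>x\<in>set \<mu>. lo \<le> x"
proof
  fix x assume "x \<in> set \<mu>"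
  then obtain i where i: "i < m" "x = \<mu> ! i" using spectral_decompositionD(2)[OF S'] by (auto simp: in_set_conv_nth)
  note SD' = spectral_decompositionD[OF S']
  define v where "v = col V i"
  have v: "v \<in> carrier_vec m" unfolding v_def using SD'(4) i by simp
  note ev = spectral_eigenvector[OF S' i(1), folded v_def]
  have "(vec_norm v)^2 = 1" using ev(2) cinner_self[of v] by (metis of_real_eq_1_iff)
  moreover have "cinner v (A *\<^sub>v v) = complex_of_real x"
    unfolding ev(1) i(2) using v ev(2) by (simp add: cinner_smult_right[of _ m])
  ultimately show "lo \<le> x" using spectral_form_ge[OF S v lo] by simp
qed

lemma gibbs_spectral:
  assumes H: "H \<in> carrier_mat d d" "hermitian H" and d: "d > 0"
  obtains V \<mu> where "spectral_decomposition d (gibbs \<beta> H) V \<mu>" "\<forall>x\<in>set \<mu>. 0 < x"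
    "\<And>t. mat_rpow (gibbs \<beta> H) t = spectral_fun V \<mu> (\<lambda>x. x powr t)"
proof -
  have hH: "adj H = H" using H unfolding hermitian_def by auto
  obtain U ls where U: "spectral_decomposition d H U ls" "\<And>f. mat_fun f H = spectral_fun U ls f"
    using mat_fun_spectral[OF H(1) hH] by blast
  note UD = spectral_decompositionD[OF U(1)]
  define Z where "Z = (\<Sum>i<d. exp (- \<beta> * ls ! i))"
  have Zpos: "Z > 0" unfolding Z_def using d by (intro sum_pos) auto
  have trE: "mtrace (spectral_fun U ls (\<lambda>x. exp (- \<beta> * x))) = of_real Z"
    using mtrace_spectral_decomposition[OF spectral_fun_decomposition[OF UD(1,2)]] UD(2) by (simp add: Z_def)
  define r where "r = map (\<lambda>x. exp (- \<beta> * x) / Z) ls"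
  have "gibbs \<beta> H = (1 / of_real Z) \<cdot>\<^sub>m spectral_fun U ls (\<lambda>x. exp (- \<beta> * x))"
    unfolding gibbs_def U(2) trE ..
  also have "\<dots> = spectral_fun U ls (\<lambda>x. exp (- \<beta> * x) / Z)"
  proof -
    have Dc: "diag_of (map (\<lambda>x. complex_of_real (exp (- \<beta> * x))) ls) \<in> carrier_mat d d"
      using UD(2) diag_of_carrier[of "map (\<lambda>x. complex_of_real (exp (- \<beta> * x))) ls"] by simp
    have "(1 / of_real Z) \<cdot>\<^sub>m spectral_fun U ls (\<lambda>x. exp (- \<beta> * x))
        = U * ((1 / of_real Z) \<cdot>\<^sub>m diag_of (map (\<lambda>x. complex_of_real (exp (- \<beta> * x))) ls)) * adj U"
      unfolding spectral_fun_def
      using mult_smult_assoc_mat[of "U * _" d d "adj U" d] mult_smult_distrib[OF UD(4) Dc] UD(4) Dc by simp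
    then show ?thesis unfolding spectral_fun_def diag_of_smult by (simp add: o_def)
  qed
  finally have S: "spectral_decomposition d (gibbs \<beta> H) U r"
    unfolding r_def using spectral_fun_decomposition[OF UD(1,2)] by simp
  have rpos: "\<forall>x\<in>set r. Min (set r) \<le> x" "0 < Min (set r)"
    unfolding r_def using Zpos d UD(2) by auto
  have rho: "gibbs \<beta> H \<in> carrier_mat d d" "adj (gibbs \<beta> H) = gibbs \<beta> H"
    using spectral_decompositionD(5)[OF S] spectral_decomposition_adj[OF S] by auto
  obtain V \<mu> where V: "spectral_decomposition d (gibbs \<beta> H) V \<mu>" "\<And>f. mat_fun f (gibbs \<beta> H) = spectral_fun V \<mu> f"
    using mat_fun_spectral[OF rho] by blast
  have "\<forall>x\<in>set \<mu>. 0 < x" using spectral_decomposition_lower_bound[OF S V(1) rpos(1)] rpos(2) by force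
  then show ?thesis using that V by (simp add: mat_rpow_def)
qed

section \<open>Linear maps on matrices\<close>

definition vec_of_mat :: "nat \<Rightarrow> complex mat \<Rightarrow> complex vec" where
  "vec_of_mat d X = vec (d * d) (\<lambda>p. X $$ (p div d, p mod d))"

definition mat_of_vec :: "nat \<Rightarrow> complex vec \<Rightarrow> complex mat" where
  "mat_of_vec d v = mat d d (\<lambda>(i,j). v $ (i * d + j))"

lemma vec_of_mat_carrier[simp]: "vec_of_mat d X \<in> carrier_vec (d * d)" by (simp add: vec_of_mat_def)
lemma mat_of_vec_carrier[simp]: "mat_of_vec d v \<in> carrier_mat d d" by (simp add: mat_of_vec_def)

lemma div_mod_less_square: fixes p d :: nat assumes "p < d * d" shows "p div d < d" "p mod d < d"
proof -
  have "d > 0" using assms by (cases d) auto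
  then show "p mod d < d" by simp
  show "p div d < d" using assms by (simp add: less_mult_imp_div_less)
qed

lemma index_less_square: fixes i j d :: nat assumes "i < d" "j < d" shows "i * d + j < d * d"
proof -
  have "i * d + j < i * d + d" using assms by simp
  also have "\<dots> = (Suc i) * d" by simp
  also have "\<dots> \<le> d * d" using assms by (intro mult_right_mono) auto
  finally show ?thesis .
qed

lemma mat_of_vec_of_mat[simp]: "X \<in> carrier_mat d d \<Longrightarrow> mat_of_vec d (vec_of_mat d X) = X"
  by (rule eq_matI) (auto simp: mat_of_vec_def vec_of_mat_def index_less_square)

lemma vec_of_mat_of_vec[simp]: "v \<in> carrier_vec (d * d) \<Longrightarrow> vec_of_mat d (mat_of_vec d v) = v"
  by (rule eq_vecI) (auto simp: mat_of_vec_def vec_of_mat_def div_mod_less_square)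

lemma vec_of_mat_inj: "X \<in> carrier_mat d d \<Longrightarrow> Y \<in> carrier_mat d d \<Longrightarrow> vec_of_mat d X = vec_of_mat d Y \<Longrightarrow> X = Y"
  by (metis mat_of_vec_of_mat)

lemma vec_of_mat_add: "X \<in> carrier_mat d d \<Longrightarrow> Y \<in> carrier_mat d d \<Longrightarrow> vec_of_mat d (X + Y) = vec_of_mat d X + vec_of_mat d Y"
  by (rule eq_vecI) (auto simp: vec_of_mat_def div_mod_less_square)

lemma vec_of_mat_smult: "X \<in> carrier_mat d d \<Longrightarrow> vec_of_mat d (c \<cdot>\<^sub>m X) = c \<cdot>\<^sub>v vec_of_mat d X"
  by (rule eq_vecI) (auto simp: vec_of_mat_def div_mod_less_square)

lemma vec_of_mat_zero: "vec_of_mat d (0\<^sub>m d d) = 0\<^sub>v (d * d)"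
  by (rule eq_vecI) (auto simp: vec_of_mat_def div_mod_less_square)

lemma sum_div_mod_square: fixes d :: nat shows "(\<Sum>p<d * d. f (p div d) (p mod d)) = (\<Sum>i<d. \<Sum>j<d. f i j)"
proof -
  have bij: "bij_betw (\<lambda>(i,j). i * d + j) ({..<d} \<times> {..<d}) {..<d * d}"
    by (rule bij_betwI[where g = "\<lambda>p. (p div d, p mod d)"]) (auto simp: index_less_square div_mod_less_square)
  have "(\<Sum>p<d * d. f (p div d) (p mod d)) = (\<Sum>x\<in>{..<d} \<times> {..<d}. f ((case x of (i,j) \<Rightarrow> i * d + j) div d) ((case x of (i,j) \<Rightarrow> i * d + j) mod d))"
    using sum.reindex_bij_betw[OF bij, of "\<lambda>p. f (p div d) (p mod d)"] by simp
  also have "\<dots> = (\<Sum>x\<in>{..<d} \<times> {..<d}. f (fst x) (snd x))"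
    by (intro sum.cong) auto
  also have "\<dots> = (\<Sum>i<d. \<Sum>j<d. f i j)"
    by (simp add: sum.cartesian_product case_prod_beta)
  finally show ?thesis .
qed

definition hs_inner :: "complex mat \<Rightarrow> complex mat \<Rightarrow> complex" where
  "hs_inner A B = mtrace (adj A * B)"

lemma hs_inner_vec_of_mat: assumes "A \<in> carrier_mat d d" "B \<in> carrier_mat d d"
  shows "hs_inner A B = cinner (vec_of_mat d A) (vec_of_mat d B)"
proof -
  have "hs_inner A B = (\<Sum>i<d. \<Sum>k<d. cnj (A $$ (k,i)) * B $$ (k,i))"
    using assms by (simp add: hs_inner_def mtrace_def scalar_prod_def atLeast0LessThan)
  also have "\<dots> = (\<Sum>k<d. \<Sum>i<d. cnj (A $$ (k,i)) * B $$ (k,i))" by (rule sum.swap)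
  also have "\<dots> = (\<Sum>p<d * d. cnj (A $$ (p div d, p mod d)) * B $$ (p div d, p mod d))"
    by (rule sum_div_mod_square[symmetric])
  also have "\<dots> = cinner (vec_of_mat d A) (vec_of_mat d B)"
    by (simp add: cinner_def vec_of_mat_def atLeast0LessThan)
  finally show ?thesis .
qed

definition mat_linear :: "nat \<Rightarrow> (complex mat \<Rightarrow> complex mat) \<Rightarrow> bool" where
  "mat_linear d L \<longleftrightarrow> (\<exists>Lh \<in> carrier_mat (d * d) (d * d). \<forall>X\<in>carrier_mat d d.
     L X \<in> carrier_mat d d \<and> vec_of_mat d (L X) = Lh *\<^sub>v vec_of_mat d X)"

lemma mat_linear_carrier: "mat_linear d L \<Longrightarrow> X \<in> carrier_mat d d \<Longrightarrow> L X \<in> carrier_mat d d"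
  unfolding mat_linear_def by auto

lemma mat_linear_comp: assumes "mat_linear d L1" "mat_linear d L2" shows "mat_linear d (L1 \<circ> L2)"
proof -
  obtain A where A: "A \<in> carrier_mat (d * d) (d * d)" "\<forall>X\<in>carrier_mat d d. L1 X \<in> carrier_mat d d \<and> vec_of_mat d (L1 X) = A *\<^sub>v vec_of_mat d X"
    using assms(1) unfolding mat_linear_def by blast
  obtain B where B: "B \<in> carrier_mat (d * d) (d * d)" "\<forall>X\<in>carrier_mat d d. L2 X \<in> carrier_mat d d \<and> vec_of_mat d (L2 X) = B *\<^sub>v vec_of_mat d X"
    using assms(2) unfolding mat_linear_def by blast
  show ?thesis unfolding mat_linear_def
  proof (intro bexI[of _ "A * B"] ballI conjI)
    fix X :: "complex mat" assume X: "X \<in> carrier_mat d d"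
    show "(L1 \<circ> L2) X \<in> carrier_mat d d" using A B X by auto
    have "vec_of_mat d ((L1 \<circ> L2) X) = A *\<^sub>v (B *\<^sub>v vec_of_mat d X)" using A B X by auto
    also have "\<dots> = (A * B) *\<^sub>v vec_of_mat d X" using A B by (subst assoc_mult_mat_vec) auto
    finally show "vec_of_mat d ((L1 \<circ> L2) X) = (A * B) *\<^sub>v vec_of_mat d X" .
  qed (use A B in auto)
qed

lemma mat_linear_plus: assumes "mat_linear d L1" "mat_linear d L2" shows "mat_linear d (\<lambda>X. L1 X + L2 X)"
proof -
  obtain A where A: "A \<in> carrier_mat (d * d) (d * d)" "\<forall>X\<in>carrier_mat d d. L1 X \<in> carrier_mat d d \<and> vec_of_mat d (L1 X) = A *\<^sub>v vec_of_mat d X"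
    using assms(1) unfolding mat_linear_def by blast
  obtain B where B: "B \<in> carrier_mat (d * d) (d * d)" "\<forall>X\<in>carrier_mat d d. L2 X \<in> carrier_mat d d \<and> vec_of_mat d (L2 X) = B *\<^sub>v vec_of_mat d X"
    using assms(2) unfolding mat_linear_def by blast
  show ?thesis unfolding mat_linear_def
  proof (intro bexI[of _ "A + B"] ballI conjI)
    fix X :: "complex mat" assume X: "X \<in> carrier_mat d d"
    show "L1 X + L2 X \<in> carrier_mat d d" using A B X by auto
    have "vec_of_mat d (L1 X + L2 X) = A *\<^sub>v vec_of_mat d X + B *\<^sub>v vec_of_mat d X" using A B X by (simp add: vec_of_mat_add)
    also have "\<dots> = (A + B) *\<^sub>v vec_of_mat d X" using A B by (subst add_mult_distrib_mat_vec) auto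
    finally show "vec_of_mat d (L1 X + L2 X) = (A + B) *\<^sub>v vec_of_mat d X" .
  qed (use A B in auto)
qed

lemma mat_linear_zero: "mat_linear d (\<lambda>X. 0\<^sub>m d d)"
  unfolding mat_linear_def by (intro bexI[of _ "0\<^sub>m (d * d) (d * d)"]) (auto simp: vec_of_mat_zero)

lemma mat_linear_cong: "mat_linear d L \<Longrightarrow> (\<And>X. X \<in> carrier_mat d d \<Longrightarrow> L' X = L X) \<Longrightarrow> mat_linear d L'"
  unfolding mat_linear_def by auto

lemma mat_linear_msum: "(\<And>K. K \<in> set Ks \<Longrightarrow> mat_linear d (f K)) \<Longrightarrow> mat_linear d (\<lambda>X. msum d (map (\<lambda>K. f K X) Ks))"
proof (induction Ks)
  case Nil
  then show ?case using mat_linear_zero by simp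
next
  case (Cons K Ks)
  then show ?case using mat_linear_plus[of d "f K" "\<lambda>X. msum d (map (\<lambda>K. f K X) Ks)"] by simp
qed

lemma mult_mult_index: fixes A B X :: "complex mat" assumes "A \<in> carrier_mat d d" "B \<in> carrier_mat d d" "X \<in> carrier_mat d d" "i < d" "j < d"
  shows "(A * X * B) $$ (i,j) = (\<Sum>k<d. \<Sum>l<d. A $$ (i,k) * B $$ (l,j) * X $$ (k,l))"
proof -
  have "(A * X * B) $$ (i,j) = (\<Sum>k<d. A $$ (i,k) * (\<Sum>l<d. X $$ (k,l) * B $$ (l,j)))"
    using assms by (simp add: scalar_prod_def atLeast0LessThan)
  also have "\<dots> = (\<Sum>k<d. \<Sum>l<d. A $$ (i,k) * (X $$ (k,l) * B $$ (l,j)))"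
    by (simp add: sum_distrib_left)
  also have "\<dots> = (\<Sum>k<d. \<Sum>l<d. A $$ (i,k) * B $$ (l,j) * X $$ (k,l))"
    by (intro sum.cong refl) (simp add: algebra_simps)
  finally show ?thesis .
qed

lemma mat_linear_sandwich: assumes A: "A \<in> carrier_mat d d" and B: "B \<in> carrier_mat d d"
  shows "mat_linear d (\<lambda>X. A * X * B)"
  unfolding mat_linear_def
proof (intro bexI[of _ "mat (d * d) (d * d) (\<lambda>(p,q). A $$ (p div d, q div d) * B $$ (q mod d, p mod d))"] ballI conjI)
  fix X :: "complex mat" assume X: "X \<in> carrier_mat d d"
  show "A * X * B \<in> carrier_mat d d" using A B X by simp
  let ?S = "mat (d * d) (d * d) (\<lambda>(p,q). A $$ (p div d, q div d) * B $$ (q mod d, p mod d))"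
  show "vec_of_mat d (A * X * B) = ?S *\<^sub>v vec_of_mat d X"
  proof (rule eq_vecI)
    fix p assume "p < dim_vec (?S *\<^sub>v vec_of_mat d X)"
    then have p: "p < d * d" by simp
    have "(?S *\<^sub>v vec_of_mat d X) $ p = (\<Sum>q<d * d. A $$ (p div d, q div d) * B $$ (q mod d, p mod d) * X $$ (q div d, q mod d))"
      using p by (simp add: scalar_prod_def vec_of_mat_def atLeast0LessThan)
    also have "\<dots> = (\<Sum>k<d. \<Sum>l<d. A $$ (p div d, k) * B $$ (l, p mod d) * X $$ (k,l))"
      by (rule sum_div_mod_square)
    also have "\<dots> = (A * X * B) $$ (p div d, p mod d)"
      using mult_mult_index[OF A B X div_mod_less_square[OF p]] by simp
    finally show "vec_of_mat d (A * X * B) $ p = (?S *\<^sub>v vec_of_mat d X) $ p" using p by (simp add: vec_of_mat_def)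
  qed simp
qed simp

lemma mat_linear_kraus_dual: assumes "\<And>K. K \<in> set Ks \<Longrightarrow> K \<in> carrier_mat d d" shows "mat_linear d (kraus_dual d Ks)"
  unfolding kraus_dual_def using assms by (intro mat_linear_msum mat_linear_sandwich) auto

lemma mat_linear_add: assumes "mat_linear d L" "A \<in> carrier_mat d d" "B \<in> carrier_mat d d"
  shows "L (A + B) = L A + L B"
proof -
  obtain Lh where Lh: "Lh \<in> carrier_mat (d * d) (d * d)" "\<forall>X\<in>carrier_mat d d. L X \<in> carrier_mat d d \<and> vec_of_mat d (L X) = Lh *\<^sub>v vec_of_mat d X"
    using assms(1) unfolding mat_linear_def by blast
  show ?thesis
  proof (rule vec_of_mat_inj[of _ d])
    show "L (A + B) \<in> carrier_mat d d" "L A + L B \<in> carrier_mat d d" using Lh assms by auto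
    show "vec_of_mat d (L (A + B)) = vec_of_mat d (L A + L B)"
      using Lh assms by (simp add: vec_of_mat_add mult_add_distrib_mat_vec[of _ "d * d" "d * d"])
  qed
qed

lemma mat_linear_smult: assumes "mat_linear d L" "A \<in> carrier_mat d d"
  shows "L (c \<cdot>\<^sub>m A) = c \<cdot>\<^sub>m L A"
proof -
  obtain Lh where Lh: "Lh \<in> carrier_mat (d * d) (d * d)" "\<forall>X\<in>carrier_mat d d. L X \<in> carrier_mat d d \<and> vec_of_mat d (L X) = Lh *\<^sub>v vec_of_mat d X"
    using assms(1) unfolding mat_linear_def by blast
  show ?thesis
  proof (rule vec_of_mat_inj[of _ d])
    show "L (c \<cdot>\<^sub>m A) \<in> carrier_mat d d" "c \<cdot>\<^sub>m L A \<in> carrier_mat d d" using Lh assms by auto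
    show "vec_of_mat d (L (c \<cdot>\<^sub>m A)) = vec_of_mat d (c \<cdot>\<^sub>m L A)"
      using Lh assms by (simp add: vec_of_mat_smult mult_mat_vec[of _ "d * d" "d * d"])
  qed
qed

lemma mat_linear_kraus_rep: assumes "kraus_rep d Ks T" shows "mat_linear d T"
proof -
  note K = kraus_repD[OF assms]
  have "mat_linear d (\<lambda>X. msum d (map (\<lambda>K. K * X * adj K) Ks))"
    using K by (intro mat_linear_msum mat_linear_sandwich) auto
  then show ?thesis using K(3) by (rule mat_linear_cong)
qed

lemma mat_linear_channel: "quantum_channel d T \<Longrightarrow> mat_linear d T"
  unfolding quantum_channel_def using mat_linear_kraus_rep by blast

lemma mat_linear_channel_dual: assumes "quantum_channel d T" shows "mat_linear d (channel_dual d T)"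
proof -
  obtain Ks where "kraus_rep d Ks T" "channel_dual d T = kraus_dual d Ks" using channel_dual_kraus[OF assms] .
  then show ?thesis using mat_linear_kraus_dual[OF kraus_repD(1)] by simp
qed

section \<open>Self-adjoint maps and the sandwich bound\<close>

definition self_adjoint :: "nat \<Rightarrow> (complex mat \<Rightarrow> complex mat) \<Rightarrow> bool" where
  "self_adjoint d L \<longleftrightarrow> (\<forall>A\<in>carrier_mat d d. \<forall>B\<in>carrier_mat d d. hs_inner (L A) B = hs_inner A (L B))"

lemma hs_inner_self: "X \<in> carrier_mat d d \<Longrightarrow> hs_inner X X = of_real ((vec_norm (vec_of_mat d X))^2)"
  by (simp add: hs_inner_vec_of_mat cinner_self)

lemma vec_norm_vec_of_mat_pos: assumes "X \<in> carrier_mat d d" "X \<noteq> 0\<^sub>m d d"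
  shows "vec_norm (vec_of_mat d X) > 0"
proof (rule vec_norm_pos[OF vec_of_mat_carrier])
  show "vec_of_mat d X \<noteq> 0\<^sub>v (d * d)"
    using vec_of_mat_inj[OF assms(1), of "0\<^sub>m d d"] vec_of_mat_zero assms by auto
qed

lemma hs_inner_smult_left: "A \<in> carrier_mat d d \<Longrightarrow> B \<in> carrier_mat d d \<Longrightarrow>
    hs_inner (c \<cdot>\<^sub>m A) B = cnj c * hs_inner A B"
  unfolding hs_inner_def adj_smult by (simp add: mult_smult_assoc_mat[of _ d d] mtrace_smult[of _ d])

lemma hs_inner_smult_right: "A \<in> carrier_mat d d \<Longrightarrow> B \<in> carrier_mat d d \<Longrightarrow>
    hs_inner A (c \<cdot>\<^sub>m B) = c * hs_inner A B"
  unfolding hs_inner_def by (simp add: mult_smult_distrib[of _ d d] mtrace_smult[of _ d])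

lemma self_adjoint_spectrum_real: assumes "self_adjoint d L" "c \<in> channel_spectrum d L"
  shows "c = of_real (Re c)"
proof -
  obtain X where X: "X \<in> carrier_mat d d" "X \<noteq> 0\<^sub>m d d" "L X = c \<cdot>\<^sub>m X"
    using assms(2) unfolding channel_spectrum_def by blast
  have "c * hs_inner X X = cnj c * hs_inner X X"
    using assms(1) X unfolding self_adjoint_def
    by (metis hs_inner_smult_left hs_inner_smult_right)
  moreover have "hs_inner X X \<noteq> 0"
    using hs_inner_self[OF X(1)] vec_norm_vec_of_mat_pos[OF X(1,2)] by simp
  ultimately have "cnj c = c" by simp
  then show ?thesis by (simp add: complex_eq_iff)
qed

lemma hermitian_if_symmetric_form:
  assumes A: "A \<in> carrier_mat n n"
    and sym: "\<And>a b. a \<in> carrier_vec n \<Longrightarrow> b \<in> carrier_vec n \<Longrightarrow> cinner (A *\<^sub>v a) b = cinner a (A *\<^sub>v b)"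
  shows "adj A = A"
proof (rule eq_matI)
  fix p q assume "p < dim_row A" "q < dim_col A"
  then have pq: "p < n" "q < n" using A by auto
  have "A $$ (p,q) = cinner (unit_vec n p) (A *\<^sub>v unit_vec n q)"
    using pq A by (simp add: cinner_unit_vec[of _ n] mult_mat_unit_vec_index)
  also have "\<dots> = cinner (A *\<^sub>v unit_vec n p) (unit_vec n q)" using sym pq by simp
  also have "\<dots> = cinner (unit_vec n p) (adj A *\<^sub>v unit_vec n q)"
    using cinner_adj[of "adj A" n n "unit_vec n p" "unit_vec n q"] A pq by simp
  also have "\<dots> = adj A $$ (p,q)" using pq A
    by (simp add: cinner_unit_vec[of _ n] mult_mat_unit_vec_index[of "adj A" n])
  finally show "adj A $$ (p,q) = A $$ (p,q)" by simp
qed (use A in auto)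

text \<open>Vectorisation turns a self-adjoint map into a Hermitian \<open>d\<^sup>2 \<times> d\<^sup>2\<close> matrix, whose
  eigenvectors devectorise to eigenmatrices of the map.\<close>

lemma self_adjoint_spectral:
  assumes L: "mat_linear d L" and sa: "self_adjoint d L"
  obtains A W ls where "spectral_decomposition (d * d) A W ls"
    "\<And>X. X \<in> carrier_mat d d \<Longrightarrow> vec_of_mat d (L X) = A *\<^sub>v vec_of_mat d X"
    "\<forall>x\<in>set ls. complex_of_real x \<in> channel_spectrum d L"
proof -
  let ?n = "d * d"
  obtain A where A: "A \<in> carrier_mat ?n ?n"
    "\<forall>X\<in>carrier_mat d d. L X \<in> carrier_mat d d \<and> vec_of_mat d (L X) = A *\<^sub>v vec_of_mat d X"
    using L unfolding mat_linear_def by blast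
  have sym: "cinner (A *\<^sub>v a) b = cinner a (A *\<^sub>v b)" if a: "a \<in> carrier_vec ?n" and b: "b \<in> carrier_vec ?n" for a b
  proof -
    have "hs_inner (L (mat_of_vec d a)) (mat_of_vec d b) = hs_inner (mat_of_vec d a) (L (mat_of_vec d b))"
      using sa unfolding self_adjoint_def by auto
    then show ?thesis using A a b by (simp add: hs_inner_vec_of_mat[of _ d])
  qed
  have herm: "adj A = A" using hermitian_if_symmetric_form[OF A(1)] sym by blast
  obtain W ls where S: "spectral_decomposition ?n A W ls"
    using hermitian_spectral_decomposition[OF A(1) herm] by blast
  note SD = spectral_decompositionD[OF S]
  have "complex_of_real (ls ! i) \<in> channel_spectrum d L" if i: "i < ?n" for i
  proof -
    define w where "w = col W i"
    have w: "w \<in> carrier_vec ?n" unfolding w_def using SD(4) i by auto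
    note ev = spectral_eigenvector[OF S i, folded w_def]
    define X where "X = mat_of_vec d w"
    have X: "X \<in> carrier_mat d d" "vec_of_mat d X = w" unfolding X_def using w by auto
    have "X \<noteq> 0\<^sub>m d d"
    proof
      assume "X = 0\<^sub>m d d"
      then have "w = 0\<^sub>v ?n" using X(2) vec_of_mat_zero by simp
      then show False using ev(2) by (simp add: cinner_def)
    qed
    moreover have "L X = complex_of_real (ls ! i) \<cdot>\<^sub>m X"
      using A X ev(1) by (intro vec_of_mat_inj[of _ d]) (auto simp: vec_of_mat_smult)
    ultimately show ?thesis unfolding channel_spectrum_def using X(1) by blast
  qed
  then have "\<forall>x\<in>set ls. complex_of_real x \<in> channel_spectrum d L"
    using SD(2) by (auto simp: in_set_conv_nth)
  then show ?thesis using that S A by blast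
qed

lemma spectral_sandwich_form:
  assumes SA: "spectral_decomposition m A WA la" and la: "\<forall>x\<in>set la. \<bar>x\<bar> \<le> 1"
    and SB: "spectral_decomposition m B WB lb" and lb: "\<forall>x\<in>set lb. 0 \<le> x \<and> x \<le> 1"
    and v: "v \<in> carrier_vec m"
  defines "q \<equiv> Re (cinner v (A *\<^sub>v (B *\<^sub>v (A *\<^sub>v v))))"
  shows "cinner v (A *\<^sub>v (B *\<^sub>v (A *\<^sub>v v))) = of_real q" "0 \<le> q" "q \<le> (vec_norm v)^2"
    "q = (vec_norm v)^2 \<Longrightarrow> B *\<^sub>v (A *\<^sub>v v) = A *\<^sub>v v"
proof -
  note SAD = spectral_decompositionD[OF SA] and SBD = spectral_decompositionD[OF SB]
  define w where "w = A *\<^sub>v v"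
  have w: "w \<in> carrier_vec m" unfolding w_def using SAD(5) v by simp
  have e: "cinner v (A *\<^sub>v (B *\<^sub>v w)) = cinner w (B *\<^sub>v w)"
    using cinner_adj[OF SAD(5) v, of "B *\<^sub>v w"] spectral_decomposition_adj[OF SA] SBD(5) w
    by (simp add: w_def)
  have q: "q = Re (cinner w (B *\<^sub>v w))" unfolding q_def w_def[symmetric] e ..
  show "cinner v (A *\<^sub>v (B *\<^sub>v (A *\<^sub>v v))) = of_real q"
    unfolding w_def[symmetric] e q using spectral_form_real[OF SB w] .
  show "0 \<le> q" unfolding q using spectral_form_ge[OF SB w, of 0] lb by simp
  have qw: "q \<le> (vec_norm w)^2" unfolding q using spectral_form_le[OF SB w, of 1] lb by simp
  have wv: "(vec_norm w)^2 \<le> (vec_norm v)^2" unfolding w_def using spectral_norm_le[OF SA v la] .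
  show "q \<le> (vec_norm v)^2" using qw wv by linarith
  assume "q = (vec_norm v)^2"
  then have "Re (cinner w (B *\<^sub>v w)) = (vec_norm w)^2" using qw wv unfolding q by linarith
  then show "B *\<^sub>v (A *\<^sub>v v) = A *\<^sub>v v"
    unfolding w_def[symmetric] using spectral_form_eq_fixed[OF SB w] lb by blast
qed

lemma spectral_sandwich_eigenvalue:
  assumes SA: "spectral_decomposition m A WA la" and la: "\<forall>x\<in>set la. \<bar>x\<bar> \<le> 1"
    and SB: "spectral_decomposition m B WB lb" and lb: "\<forall>x\<in>set lb. 0 \<le> x \<and> x \<le> 1"
    and v: "v \<in> carrier_vec m" "0 < vec_norm v" and eig: "A *\<^sub>v (B *\<^sub>v (A *\<^sub>v v)) = c \<cdot>\<^sub>v v"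
  shows "c \<in> complex_of_real ` {0..1}"
proof -
  note form = spectral_sandwich_form[OF SA la SB lb v(1)]
  define q where "q = Re (cinner v (A *\<^sub>v (B *\<^sub>v (A *\<^sub>v v))))"
  have "c * of_real ((vec_norm v)^2) = of_real q"
    using form(1) eig cinner_self[of v] cinner_smult_right[of v m v c] v(1) by (simp add: q_def)
  then have "c = of_real (q / (vec_norm v)^2)" using v(2) by (simp add: field_simps)
  moreover have "q / (vec_norm v)^2 \<in> {0..1}" using form(2,3) v(2) by (simp add: q_def)
  ultimately show ?thesis by blast
qed

lemma self_adjoint_sandwich:
  assumes LM: "mat_linear d LM" "self_adjoint d LM" "channel_spectrum d LM \<subseteq> complex_of_real ` {-1..1}"
    and LN: "mat_linear d LN" "self_adjoint d LN" "channel_spectrum d LN \<subseteq> complex_of_real ` {0..1}"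
  shows "channel_spectrum d (LM \<circ> LN \<circ> LM) \<subseteq> complex_of_real ` {0..1}"
    and "Y \<in> carrier_mat d d \<Longrightarrow> LM (LN (LM Y)) = Y \<Longrightarrow> LN (LM Y) = LM Y"
proof -
  obtain A WA la where A: "spectral_decomposition (d * d) A WA la"
    "\<And>X. X \<in> carrier_mat d d \<Longrightarrow> vec_of_mat d (LM X) = A *\<^sub>v vec_of_mat d X"
    "\<forall>x\<in>set la. complex_of_real x \<in> channel_spectrum d LM"
    using self_adjoint_spectral[OF LM(1,2)] by blast
  obtain B WB lb where B: "spectral_decomposition (d * d) B WB lb"
    "\<And>X. X \<in> carrier_mat d d \<Longrightarrow> vec_of_mat d (LN X) = B *\<^sub>v vec_of_mat d X"
    "\<forall>x\<in>set lb. complex_of_real x \<in> channel_spectrum d LN"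
    using self_adjoint_spectral[OF LN(1,2)] by blast
  have la: "\<forall>x\<in>set la. \<bar>x\<bar> \<le> 1" using A(3) LM(3) by (fastforce simp: abs_le_iff)
  have lb: "\<forall>x\<in>set lb. 0 \<le> x \<and> x \<le> 1" using B(3) LN(3) by fastforce
  note form = spectral_sandwich_form[OF A(1) la B(1) lb vec_of_mat_carrier]
  have LMc: "LM X \<in> carrier_mat d d" and LNc: "LN X \<in> carrier_mat d d" if "X \<in> carrier_mat d d" for X
    using that LM(1) LN(1) by (auto intro: mat_linear_carrier)
  have vec: "vec_of_mat d (LM (LN (LM Y))) = A *\<^sub>v (B *\<^sub>v (A *\<^sub>v vec_of_mat d Y))" if "Y \<in> carrier_mat d d" for Y
    using that by (simp add: A(2) B(2) LMc LNc)
  show "channel_spectrum d (LM \<circ> LN \<circ> LM) \<subseteq> complex_of_real ` {0..1}"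
  proof
    fix c assume "c \<in> channel_spectrum d (LM \<circ> LN \<circ> LM)"
    then obtain Y where Y: "Y \<in> carrier_mat d d" "Y \<noteq> 0\<^sub>m d d" "LM (LN (LM Y)) = c \<cdot>\<^sub>m Y"
      unfolding channel_spectrum_def by auto
    have "A *\<^sub>v (B *\<^sub>v (A *\<^sub>v vec_of_mat d Y)) = c \<cdot>\<^sub>v vec_of_mat d Y"
      using vec[OF Y(1)] Y(3) Y(1) by (simp add: vec_of_mat_smult)
    then show "c \<in> complex_of_real ` {0..1}"
      using spectral_sandwich_eigenvalue[OF A(1) la B(1) lb vec_of_mat_carrier] vec_norm_vec_of_mat_pos[OF Y(1,2)]
      by blast
  qed
  show "LN (LM Y) = LM Y" if Y: "Y \<in> carrier_mat d d" and fixed: "LM (LN (LM Y)) = Y"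
  proof -
    define v where "v = vec_of_mat d Y"
    have "A *\<^sub>v (B *\<^sub>v (A *\<^sub>v v)) = v" using vec[OF Y] fixed by (simp add: v_def)
    then have "Re (cinner v (A *\<^sub>v (B *\<^sub>v (A *\<^sub>v v)))) = (vec_norm v)^2" by (simp add: cinner_self)
    then have "B *\<^sub>v (A *\<^sub>v v) = A *\<^sub>v v" using form(4)[of Y, folded v_def] by simp
    then show ?thesis using Y by (intro vec_of_mat_inj[of _ d]) (auto simp: v_def A(2) B(2) LMc LNc)
  qed
qed

section \<open>Positivity and the eigenvalues of a dual channel\<close>

definition psd_mat :: "nat \<Rightarrow> complex mat \<Rightarrow> bool" where
  "psd_mat d B \<longleftrightarrow> (\<forall>w\<in>carrier_vec d. Im (cinner w (B *\<^sub>v w)) = 0 \<and> 0 \<le> Re (cinner w (B *\<^sub>v w)))"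

lemma channel_dual_psd: assumes T: "quantum_channel d T" and B: "B \<in> carrier_mat d d" and p: "psd_mat d B"
  shows "psd_mat d (channel_dual d T B)"
proof -
  obtain Ks where K: "kraus_rep d Ks T" "channel_dual d T = kraus_dual d Ks" using channel_dual_kraus[OF T] .
  note Kc = kraus_repD(1)[OF K(1)]
  show ?thesis unfolding psd_mat_def
  proof (intro ballI conjI)
    fix v :: "complex vec" assume v: "v \<in> carrier_vec d"
    have e: "cinner v (channel_dual d T B *\<^sub>v v) = (\<Sum>K\<leftarrow>Ks. cinner (K *\<^sub>v v) (B *\<^sub>v (K *\<^sub>v v)))"
      using kraus_dual_form[OF Kc B v] K(2) by simp
    have w: "K *\<^sub>v v \<in> carrier_vec d" if "K \<in> set Ks" for K using Kc[OF that] v by simp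
    have Re: "Re (sum_list (map f xs)) = sum_list (map (\<lambda>x. Re (f x)) xs)"
      and Im: "Im (sum_list (map f xs)) = sum_list (map (\<lambda>x. Im (f x)) xs)" for f :: "_ \<Rightarrow> complex" and xs
      by (induction xs) auto
    show "Im (cinner v (channel_dual d T B *\<^sub>v v)) = 0"
      unfolding e Im using p w unfolding psd_mat_def by (simp cong: map_cong)
    show "0 \<le> Re (cinner v (channel_dual d T B *\<^sub>v v))"
      unfolding e Re using p w unfolding psd_mat_def by (intro sum_list_nonneg) auto
  qed
qed

lemma channel_dual_adj: assumes T: "quantum_channel d T" and X: "X \<in> carrier_mat d d"
  shows "channel_dual d T (adj X) = adj (channel_dual d T X)"
proof -
  obtain Ks where K: "kraus_rep d Ks T" "channel_dual d T = kraus_dual d Ks" using channel_dual_kraus[OF T] .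
  show ?thesis using kraus_dual_adj[OF kraus_repD(1)[OF K(1)] X] K(2) by simp
qed

lemma channel_dual_one: assumes T: "quantum_channel d T" shows "channel_dual d T (1\<^sub>m d) = 1\<^sub>m d"
proof -
  obtain Ks where K: "kraus_rep d Ks T" "channel_dual d T = kraus_dual d Ks" using channel_dual_kraus[OF T] .
  show ?thesis using kraus_dual_one[OF K(1)] K(2) by simp
qed

lemma channel_adj: assumes T: "quantum_channel d T" and X: "X \<in> carrier_mat d d"
  shows "T (adj X) = adj (T X)"
  using T kraus_rep_adj[OF _ X] unfolding quantum_channel_def by blast

lemma hermitian_parts_eigen:
  assumes L: "mat_linear d L" and L_adj: "\<And>X. X \<in> carrier_mat d d \<Longrightarrow> L (adj X) = adj (L X)"
    and X: "X \<in> carrier_mat d d" and eig: "L X = complex_of_real r \<cdot>\<^sub>m X"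
  defines "W1 \<equiv> X + adj X" and "W2 \<equiv> \<i> \<cdot>\<^sub>m X + (- \<i>) \<cdot>\<^sub>m adj X"
  shows "W1 \<in> carrier_mat d d" "adj W1 = W1" "L W1 = complex_of_real r \<cdot>\<^sub>m W1"
    "W2 \<in> carrier_mat d d" "adj W2 = W2" "L W2 = complex_of_real r \<cdot>\<^sub>m W2"
    "X = (1 / 2) \<cdot>\<^sub>m (W1 + (- \<i>) \<cdot>\<^sub>m W2)"
proof -
  have LX: "L (adj X) = complex_of_real r \<cdot>\<^sub>m adj X" using L_adj[OF X] eig by (simp add: adj_smult)
  show "W1 \<in> carrier_mat d d" "W2 \<in> carrier_mat d d" unfolding W1_def W2_def using X by auto
  show "adj W1 = W1" unfolding W1_def using X by (simp add: adj_add[of _ d d] comm_add_mat[of _ d d])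
  show "adj W2 = W2" unfolding W2_def using X by (simp add: adj_add[of _ d d] adj_smult comm_add_mat[of _ d d])
  show "L W1 = complex_of_real r \<cdot>\<^sub>m W1" unfolding W1_def using X eig LX
    by (simp add: mat_linear_add[OF L] add_smult_distrib_left_mat)
  show "L W2 = complex_of_real r \<cdot>\<^sub>m W2" unfolding W2_def using X eig LX
    by (rule_tac eq_matI) (auto simp: mat_linear_add[OF L] mat_linear_smult[OF L] algebra_simps)
  show "X = (1 / 2) \<cdot>\<^sub>m (W1 + (- \<i>) \<cdot>\<^sub>m W2)" unfolding W1_def W2_def using X
    by (rule_tac eq_matI) (auto simp: algebra_simps)
qed

lemma spectral_decomposition_max_eigenvalue:
  assumes S: "spectral_decomposition m A W ls" and nz: "A \<noteq> 0\<^sub>m m m"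
  obtains k where "k < m" "\<forall>x\<in>set ls. \<bar>x\<bar> \<le> \<bar>ls ! k\<bar>" "ls ! k \<noteq> 0"
proof -
  note SD = spectral_decompositionD[OF S]
  have ne: "set ls \<noteq> {}"
  proof
    assume "set ls = {}"
    then have "m = 0" using SD(2) by simp
    then show False using nz SD(5) by (auto intro!: eq_matI)
  qed
  have "Max (abs ` set ls) \<in> abs ` set ls" using ne by (intro Max_in) auto
  then obtain k where k: "k < m" "\<bar>ls ! k\<bar> = Max (abs ` set ls)"
    using SD(2) by (metis imageE in_set_conv_nth)
  have le: "\<forall>x\<in>set ls. \<bar>x\<bar> \<le> \<bar>ls ! k\<bar>" unfolding k(2) by auto
  have "ls ! k \<noteq> 0"
  proof
    assume "ls ! k = 0"
    then have "diag_of (map complex_of_real ls) = 0\<^sub>m m m"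
      using le SD(2) by (intro eq_matI) (auto simp: diag_of_def)
    then show False using nz SD(3,4) by simp
  qed
  then show ?thesis using that k le by blast
qed

lemma hermitian_eigenmatrix:
  assumes L: "mat_linear d L" and L_adj: "\<And>X. X \<in> carrier_mat d d \<Longrightarrow> L (adj X) = adj (L X)"
    and l: "complex_of_real l \<in> channel_spectrum d L"
  obtains Z where "Z \<in> carrier_mat d d" "adj Z = Z" "Z \<noteq> 0\<^sub>m d d" "L Z = complex_of_real l \<cdot>\<^sub>m Z"
proof -
  obtain Y where Y: "Y \<in> carrier_mat d d" "Y \<noteq> 0\<^sub>m d d" "L Y = complex_of_real l \<cdot>\<^sub>m Y"
    using l unfolding channel_spectrum_def by blast
  note parts = hermitian_parts_eigen[OF L L_adj Y(1) Y(3)]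
  show ?thesis
  proof (cases "Y + adj Y = 0\<^sub>m d d")
    case True
    then have "\<i> \<cdot>\<^sub>m Y + (- \<i>) \<cdot>\<^sub>m adj Y \<noteq> 0\<^sub>m d d" using parts(7) Y(1,2) by auto
    then show ?thesis using parts(4-6) that by blast
  next
    case False
    then show ?thesis using parts(1-3) that by blast
  qed
qed

lemma psd_shift_hermitian:
  assumes U: "spectral_decomposition d Z U z" and mx: "\<forall>x\<in>set z. \<bar>x\<bar> \<le> mx" and sg: "sg = 1 \<or> sg = -1"
  shows "psd_mat d (complex_of_real mx \<cdot>\<^sub>m 1\<^sub>m d + complex_of_real sg \<cdot>\<^sub>m Z)"
  unfolding psd_mat_def
proof (intro ballI)
  fix w :: "complex vec" assume w: "w \<in> carrier_vec d"
  have Z: "Z \<in> carrier_mat d d" using spectral_decompositionD(5)[OF U] .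
  have "- mx * (vec_norm w)^2 \<le> Re (cinner w (Z *\<^sub>v w))"
    using spectral_form_ge[OF U w] mx by (metis abs_le_iff minus_le_iff)
  moreover have "Re (cinner w (Z *\<^sub>v w)) \<le> mx * (vec_norm w)^2"
    using spectral_form_le[OF U w] mx by (metis abs_le_iff)
  moreover have "cinner w ((complex_of_real mx \<cdot>\<^sub>m 1\<^sub>m d + complex_of_real sg \<cdot>\<^sub>m Z) *\<^sub>v w)
      = of_real (mx * (vec_norm w)^2 + sg * Re (cinner w (Z *\<^sub>v w)))"
    using Z w by (simp add: cinner_lincomb[of _ d] cinner_self, subst spectral_form_real[OF U w], simp)
  ultimately show "Im (cinner w ((complex_of_real mx \<cdot>\<^sub>m 1\<^sub>m d + complex_of_real sg \<cdot>\<^sub>m Z) *\<^sub>v w)) = 0 \<and>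
      0 \<le> Re (cinner w ((complex_of_real mx \<cdot>\<^sub>m 1\<^sub>m d + complex_of_real sg \<cdot>\<^sub>m Z) *\<^sub>v w))"
    using sg by auto
qed

text \<open>If \<open>m\<close> is the largest modulus of an eigenvalue of the Hermitian eigenmatrix \<open>Z\<close>, then
  \<open>m I \<plusminus> Z\<close> are positive; the dual channel is positive and unital, so \<open>m I \<plusminus> l Z\<close> are positive
  too, and testing them on an eigenvector of \<open>Z\<close> for \<open>\<plusminus>m\<close> gives \<open>\<bar>l\<bar> \<le> 1\<close>.\<close>

lemma channel_dual_eigenvalue_bound:
  assumes T: "quantum_channel d T" and l: "complex_of_real l \<in> channel_spectrum d (channel_dual d T)"
  shows "\<bar>l\<bar> \<le> 1"
proof -
  let ?Td = "channel_dual d T"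
  have lin: "mat_linear d ?Td" using mat_linear_channel_dual[OF T] .
  obtain Z where Z: "Z \<in> carrier_mat d d" "adj Z = Z" "Z \<noteq> 0\<^sub>m d d" "?Td Z = complex_of_real l \<cdot>\<^sub>m Z"
    using hermitian_eigenmatrix[OF lin channel_dual_adj[OF T] l] by blast
  obtain U z where U: "spectral_decomposition d Z U z"
    using hermitian_spectral_decomposition[OF Z(1) Z(2)] by blast
  obtain k where k: "k < d" "\<forall>x\<in>set z. \<bar>x\<bar> \<le> \<bar>z ! k\<bar>" "z ! k \<noteq> 0"
    using spectral_decomposition_max_eigenvalue[OF U Z(3)] by blast
  define mx where "mx = \<bar>z ! k\<bar>"
  have mx: "mx > 0" unfolding mx_def using k by simp
  define e where "e = col U k"
  note ek = spectral_eigenvector[OF U k(1), folded e_def]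
  have e: "e \<in> carrier_vec d" unfolding e_def using spectral_decompositionD(4)[OF U] k by auto
  have bound: "0 \<le> mx + sg * l * z ! k" if sg: "sg = 1 \<or> sg = -1" for sg :: real
  proof -
    let ?B = "complex_of_real mx \<cdot>\<^sub>m 1\<^sub>m d + complex_of_real sg \<cdot>\<^sub>m Z"
    have "psd_mat d (?Td ?B)"
      using channel_dual_psd[OF T _ psd_shift_hermitian[OF U _ sg]] k(2) Z(1) unfolding mx_def by simp
    then have "0 \<le> Re (cinner e (?Td ?B *\<^sub>v e))" using e unfolding psd_mat_def by auto
    moreover have "?Td ?B = complex_of_real mx \<cdot>\<^sub>m 1\<^sub>m d + complex_of_real (sg * l) \<cdot>\<^sub>m Z"
      using Z by (simp add: mat_linear_add[OF lin] mat_linear_smult[OF lin] channel_dual_one[OF T]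
          smult_smult_mat mult.commute)
    moreover have "cinner e ((complex_of_real mx \<cdot>\<^sub>m 1\<^sub>m d + complex_of_real (sg * l) \<cdot>\<^sub>m Z) *\<^sub>v e)
        = complex_of_real (mx + sg * l * z ! k)"
      using Z e ek by (simp add: cinner_lincomb[of _ d] cinner_smult_right[of _ d])
    ultimately show ?thesis by simp
  qed
  have "\<bar>l * z ! k\<bar> \<le> mx" using bound[of 1] bound[of "-1"] by auto
  then have "\<bar>l\<bar> * mx \<le> mx" unfolding mx_def by (simp add: abs_mult)
  then show ?thesis using mx by simp
qed

section \<open>Fixed points of a channel with a unique faithful fixed state\<close>

lemma psd_shift_positive_definite:
  assumes W: "spectral_decomposition d W U w" "\<forall>x\<in>set w. - mw \<le> x"
    and \<rho>: "spectral_decomposition d \<rho> V \<mu>" "\<forall>x\<in>set \<mu>. lo \<le> x"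
    and c: "0 \<le> c" "mw \<le> c * lo" and v: "v \<in> carrier_vec d"
  shows "0 \<le> Re (cinner v (W *\<^sub>v v)) + c * Re (cinner v (\<rho> *\<^sub>v v))"
proof -
  have "mw * (vec_norm v)^2 \<le> c * (lo * (vec_norm v)^2)"
    using c(2) by (simp add: mult.assoc[symmetric] mult_right_mono)
  also have "\<dots> \<le> c * Re (cinner v (\<rho> *\<^sub>v v))" using spectral_form_ge[OF \<rho>(1) v \<rho>(2)] c(1) by (rule mult_left_mono)
  finally show ?thesis using spectral_form_ge[OF W(1) v W(2)] by linarith
qed

text \<open>Since \<open>\<rho>\<close> is positive definite, \<open>W + c \<rho>\<close> is positive for \<open>c\<close> large, and for \<open>c\<close> larger
  still its trace \<open>t\<close> is positive as well.\<close>

lemma hermitian_shift_state: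
  assumes rho: "is_state d \<rho>" and V: "spectral_decomposition d \<rho> V \<mu>" "\<forall>x\<in>set \<mu>. 0 < x" and d: "d > 0"
    and W: "W \<in> carrier_mat d d" "adj W = W"
  obtains c t where "0 < t" "is_state d (complex_of_real (1 / t) \<cdot>\<^sub>m W + complex_of_real (c / t) \<cdot>\<^sub>m \<rho>)"
proof -
  have rc: "\<rho> \<in> carrier_mat d d" "adj \<rho> = \<rho>" "mtrace \<rho> = 1" using rho unfolding is_state_def by auto
  obtain U w where U: "spectral_decomposition d W U w"
    using hermitian_spectral_decomposition[OF W(1) W(2)] by blast
  note UD = spectral_decompositionD[OF U]
  define mw where "mw = Max (abs ` set w)"
  have mw_abs: "\<forall>x\<in>set w. \<bar>x\<bar> \<le> mw" unfolding mw_def by auto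
  then have mw: "\<forall>x\<in>set w. - mw \<le> x" by (fastforce simp: abs_le_iff)
  have mw0: "0 \<le> mw" using mw_abs UD(2) d by (metis abs_ge_zero length_greater_0_conv nth_mem order.trans)
  define lo where "lo = Min (set \<mu>)"
  have lo: "lo > 0" "\<forall>x\<in>set \<mu>. lo \<le> x"
    unfolding lo_def using V(2) spectral_decompositionD(2)[OF V(1)] d by auto
  define c where "c = mw / lo + real d * mw + 1"
  have c0: "0 \<le> c" unfolding c_def using lo mw0 by simp
  have clo: "mw \<le> c * lo"
  proof -
    have "mw = mw / lo * lo" using lo by simp
    also have "\<dots> \<le> c * lo" unfolding c_def using lo mw0 by (intro mult_right_mono) auto
    finally show ?thesis .
  qed
  define sw where "sw = (\<Sum>i<d. w ! i)"
  have trW: "mtrace W = of_real sw" unfolding sw_def by (rule mtrace_spectral_decomposition[OF U])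
  have "(\<Sum>i<d. - mw) \<le> sw" unfolding sw_def using mw UD(2) by (intro sum_mono) auto
  then have "- (real d * mw) \<le> sw" by simp
  moreover have "0 \<le> mw / lo" using lo mw0 by simp
  ultimately have t: "0 < sw + c" unfolding c_def by linarith
  define \<sigma> where "\<sigma> = complex_of_real (1 / (sw + c)) \<cdot>\<^sub>m W + complex_of_real (c / (sw + c)) \<cdot>\<^sub>m \<rho>"
  have sc: "\<sigma> \<in> carrier_mat d d" "adj \<sigma> = \<sigma>"
    unfolding \<sigma>_def using W rc by (auto simp: adj_add[of _ d d] adj_smult)
  moreover have "mtrace \<sigma> = 1"
  proof -
    have "mtrace \<sigma> = complex_of_real (1 / (sw + c) * sw + c / (sw + c))"
      unfolding \<sigma>_def using W rc trW by (simp add: mtrace_smult[of _ d] mtrace_add[of _ d])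
    also have "1 / (sw + c) * sw + c / (sw + c) = 1" using t by (simp add: add_divide_distrib[symmetric])
    finally show ?thesis by simp
  qed
  moreover have "\<exists>r\<ge>0. map_vec cnj v \<bullet> (\<sigma> *\<^sub>v v) = complex_of_real r" if v: "v \<in> carrier_vec d" for v
  proof -
    have "map_vec cnj v \<bullet> (\<sigma> *\<^sub>v v) = cinner v (\<sigma> *\<^sub>v v)" using sc v by (intro scalar_prod_cnj_cinner) auto
    also have "\<dots> = complex_of_real ((Re (cinner v (W *\<^sub>v v)) + c * Re (cinner v (\<rho> *\<^sub>v v))) / (sw + c))"
      unfolding \<sigma>_def using W rc v spectral_form_real[OF U v] spectral_form_real[OF V(1) v]
      by (simp add: cinner_lincomb[of _ d] field_simps) (simp add: add_divide_distrib)
    finally show ?thesis using psd_shift_positive_definite[OF U mw V(1) lo(2) c0 clo v] t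
      by (intro exI[of _ "(Re (cinner v (W *\<^sub>v v)) + c * Re (cinner v (\<rho> *\<^sub>v v))) / (sw + c)"]) auto
  qed
  ultimately show ?thesis using that[OF t] unfolding \<sigma>_def is_state_def by blast
qed

lemma hermitian_fixed_multiple:
  assumes N: "quantum_channel d N" and fp: "fixed_points d N = {\<rho>}"
    and V: "spectral_decomposition d \<rho> V \<mu>" "\<forall>x\<in>set \<mu>. 0 < x" and d: "d > 0"
    and W: "W \<in> carrier_mat d d" "adj W = W" "N W = W"
  shows "\<exists>c. W = c \<cdot>\<^sub>m \<rho>"
proof -
  have rs: "is_state d \<rho>" "N \<rho> = \<rho>" using fp unfolding fixed_points_def by auto
  have rc: "\<rho> \<in> carrier_mat d d" using rs unfolding is_state_def by auto
  obtain c t where t: "0 < t" and st: "is_state d (complex_of_real (1 / t) \<cdot>\<^sub>m W + complex_of_real (c / t) \<cdot>\<^sub>m \<rho>)"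
    using hermitian_shift_state[OF rs(1) V d W(1,2)] by blast
  have "N (complex_of_real (1 / t) \<cdot>\<^sub>m W + complex_of_real (c / t) \<cdot>\<^sub>m \<rho>)
      = complex_of_real (1 / t) \<cdot>\<^sub>m W + complex_of_real (c / t) \<cdot>\<^sub>m \<rho>"
    using W rc rs(2) by (simp add: mat_linear_add[OF mat_linear_channel[OF N]] mat_linear_smult[OF mat_linear_channel[OF N]])
  then have e: "complex_of_real (1 / t) \<cdot>\<^sub>m W + complex_of_real (c / t) \<cdot>\<^sub>m \<rho> = \<rho>"
    using st fp unfolding fixed_points_def by blast
  have "W = complex_of_real (t - c) \<cdot>\<^sub>m \<rho>"
  proof (rule eq_matI)
    fix i j assume "i < dim_row (complex_of_real (t - c) \<cdot>\<^sub>m \<rho>)" "j < dim_col (complex_of_real (t - c) \<cdot>\<^sub>m \<rho>)"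
    then have ij: "i < d" "j < d" using rc by auto
    have "W $$ (i,j) / of_real t + of_real c / of_real t * \<rho> $$ (i,j) = \<rho> $$ (i,j)"
      using arg_cong[OF e, of "\<lambda>X. X $$ (i,j)"] ij W rc by simp
    then show "W $$ (i,j) = (complex_of_real (t - c) \<cdot>\<^sub>m \<rho>) $$ (i,j)"
      using ij rc t by (simp add: field_simps)
  qed (use W rc in auto)
  then show ?thesis by blast
qed

lemma fixed_mat_multiple:
  assumes N: "quantum_channel d N" and fp: "fixed_points d N = {\<rho>}"
    and V: "spectral_decomposition d \<rho> V \<mu>" "\<forall>x\<in>set \<mu>. 0 < x" and d: "d > 0"
    and Z: "Z \<in> carrier_mat d d" "N Z = Z"
  shows "\<exists>c. Z = c \<cdot>\<^sub>m \<rho>"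
proof -
  have rc: "\<rho> \<in> carrier_mat d d" using fp unfolding fixed_points_def is_state_def by auto
  have "N Z = complex_of_real 1 \<cdot>\<^sub>m Z" using Z by (auto intro!: eq_matI)
  note parts = hermitian_parts_eigen[OF mat_linear_channel[OF N] channel_adj[OF N] Z(1) this]
  have one: "1 \<cdot>\<^sub>m X = X" for X :: "complex mat" by (rule eq_matI) auto
  obtain c1 c2 where "Z + adj Z = c1 \<cdot>\<^sub>m \<rho>" "\<i> \<cdot>\<^sub>m Z + (- \<i>) \<cdot>\<^sub>m adj Z = c2 \<cdot>\<^sub>m \<rho>"
    using hermitian_fixed_multiple[OF N fp V d parts(1,2)] hermitian_fixed_multiple[OF N fp V d parts(4,5)]
      parts(3,6) by (auto simp: one)
  then have "Z = (1 / 2) \<cdot>\<^sub>m (c1 \<cdot>\<^sub>m \<rho> + (- \<i>) \<cdot>\<^sub>m (c2 \<cdot>\<^sub>m \<rho>))" using parts(7) by simp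
  also have "\<dots> = ((c1 - \<i> * c2) / 2) \<cdot>\<^sub>m \<rho>" using rc by (intro eq_matI) (auto simp: field_simps)
  finally show ?thesis by blast
qed

section \<open>Detailed balance as self-adjointness\<close>

text \<open>The assumption \<open>rpow\<close> ties \<open>V\<close> and \<open>\<mu>\<close> to the eigenbasis chosen by \<open>SOME\<close> inside
  \<open>mat_fun\<close>.\<close>

locale positive_definite_frame =
  fixes d :: nat and \<rho> :: "complex mat" and s :: real and V :: "complex mat" and \<mu> :: "real list"
  assumes decomp: "spectral_decomposition d \<rho> V \<mu>"
    and pos: "\<forall>x\<in>set \<mu>. 0 < x"
    and rpow: "\<And>t. mat_rpow \<rho> t = spectral_fun V \<mu> (\<lambda>x. x powr t)"
begin

lemma unitary_V: "unitary d V" and length_mu: "length \<mu> = d"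
  using decomp unfolding spectral_decomposition_def by auto

lemma rpow_carrier[simp]: "mat_rpow \<rho> t \<in> carrier_mat d d"
  unfolding rpow using unitary_V length_mu by simp

lemma rpow_adj: "adj (mat_rpow \<rho> t) = mat_rpow \<rho> t"
  unfolding rpow by (rule spectral_fun_adj[OF unitary_V length_mu])

lemma rpow_add: "mat_rpow \<rho> a * mat_rpow \<rho> b = mat_rpow \<rho> (a + b)"
  unfolding rpow spectral_fun_mult[OF unitary_V length_mu] by (simp add: powr_add)

lemma rpow_zero: "mat_rpow \<rho> 0 = 1\<^sub>m d"
proof -
  have "mat_rpow \<rho> 0 = spectral_fun V \<mu> (\<lambda>x. 1)" unfolding rpow using pos by (intro spectral_fun_cong) auto
  then show ?thesis using spectral_fun_one[OF unitary_V length_mu] by simp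
qed

lemma rpow_one: "mat_rpow \<rho> 1 = \<rho>"
proof -
  have "mat_rpow \<rho> 1 = spectral_fun V \<mu> (\<lambda>x. x)" unfolding rpow using pos by (intro spectral_fun_cong) auto
  then show ?thesis using spectral_fun_id[OF decomp] by simp
qed

lemma rpow_mult_cancel: "X \<in> carrier_mat d d \<Longrightarrow> mat_rpow \<rho> a * (mat_rpow \<rho> b * X) = mat_rpow \<rho> (a + b) * X"
  "X \<in> carrier_mat d d \<Longrightarrow> X * mat_rpow \<rho> a * mat_rpow \<rho> b = X * mat_rpow \<rho> (a + b)"
  by (simp_all add: assoc_mult_mat[of _ d d _ d _ d, symmetric] rpow_add)
    (simp add: assoc_mult_mat[of _ d d _ d _ d] rpow_add)

definition frame :: "complex mat \<Rightarrow> complex mat" where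
  "frame X = mat_rpow \<rho> ((1 - s) / 2) * X * mat_rpow \<rho> (s / 2)"

definition unframe :: "complex mat \<Rightarrow> complex mat" where
  "unframe X = mat_rpow \<rho> (- (1 - s) / 2) * X * mat_rpow \<rho> (- s / 2)"

definition framed_dual :: "(complex mat \<Rightarrow> complex mat) \<Rightarrow> complex mat \<Rightarrow> complex mat" where
  "framed_dual T X = frame (channel_dual d T (unframe X))"

lemma frame_carrier[simp]: "X \<in> carrier_mat d d \<Longrightarrow> frame X \<in> carrier_mat d d"
  and unframe_carrier[simp]: "X \<in> carrier_mat d d \<Longrightarrow> unframe X \<in> carrier_mat d d"
  by (simp_all add: frame_def unframe_def)

lemma rpow_sandwich: assumes "X \<in> carrier_mat d d"
  shows "mat_rpow \<rho> a * (mat_rpow \<rho> b * X * mat_rpow \<rho> c) * mat_rpow \<rho> e = mat_rpow \<rho> (a + b) * X * mat_rpow \<rho> (c + e)"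
proof -
  have "mat_rpow \<rho> a * (mat_rpow \<rho> b * X * mat_rpow \<rho> c) * mat_rpow \<rho> e
      = mat_rpow \<rho> a * (mat_rpow \<rho> b * X) * (mat_rpow \<rho> c * mat_rpow \<rho> e)"
    using assms by (simp add: assoc_mult_mat[of _ d d _ d _ d])
  also have "\<dots> = mat_rpow \<rho> (a + b) * X * mat_rpow \<rho> (c + e)"
    using assms by (simp add: assoc_mult_mat[of _ d d _ d _ d, symmetric] rpow_add)
  finally show ?thesis .
qed

lemma frame_unframe: "X \<in> carrier_mat d d \<Longrightarrow> frame (unframe X) = X"
  and unframe_frame: "X \<in> carrier_mat d d \<Longrightarrow> unframe (frame X) = X"
  by (simp_all only: frame_def unframe_def rpow_sandwich)
    (simp_all add: add_divide_distrib[symmetric] rpow_zero)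

lemma frame_frame: "X \<in> carrier_mat d d \<Longrightarrow> frame (frame X) = mat_rpow \<rho> (1 - s) * X * mat_rpow \<rho> s"
  by (simp add: frame_def rpow_sandwich)

lemma frame_smult: "X \<in> carrier_mat d d \<Longrightarrow> frame (c \<cdot>\<^sub>m X) = c \<cdot>\<^sub>m frame X"
  by (simp add: frame_def mult_smult_distrib[of _ d d _ d] mult_smult_assoc_mat[of _ d d _ d])

lemma frame_inj: "X \<in> carrier_mat d d \<Longrightarrow> Y \<in> carrier_mat d d \<Longrightarrow> frame X = frame Y \<Longrightarrow> X = Y"
  by (metis unframe_frame)

lemma frame_zero: "frame (0\<^sub>m d d) = 0\<^sub>m d d"
  unfolding frame_def by (metis rpow_carrier right_mult_zero_mat left_mult_zero_mat)

lemma s_inner_frame: assumes "A \<in> carrier_mat d d" "B \<in> carrier_mat d d"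
  shows "s_inner \<rho> s A B = hs_inner (frame A) (frame B)"
proof -
  let ?P = "mat_rpow \<rho> ((1 - s) / 2)" and ?Q = "mat_rpow \<rho> (s / 2)"
  have "hs_inner (frame A) (frame B) = mtrace (?Q * (adj A * ?P * (?P * B * ?Q)))"
    unfolding hs_inner_def frame_def using assms
    by (simp add: adj_mult[of _ d d _ d] rpow_adj assoc_mult_mat[of _ d d _ d _ d])
  also have "\<dots> = mtrace (adj A * ?P * (?P * B * ?Q) * ?Q)"
    using mtrace_comm[of ?Q d d "adj A * ?P * (?P * B * ?Q)"] assms by simp
  also have "adj A * ?P * (?P * B * ?Q) * ?Q = adj A * mat_rpow \<rho> (1 - s) * B * mat_rpow \<rho> s"
    using assms by (simp add: assoc_mult_mat[of _ d d _ d _ d] rpow_mult_cancel rpow_add)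
  finally show ?thesis unfolding s_inner_def by simp
qed

lemma detailed_balance_conj:
  assumes T: "quantum_channel d T" and db: "detailed_balance d \<rho> s T" and Y: "Y \<in> carrier_mat d d"
  shows "T (mat_rpow \<rho> (1 - s) * Y * mat_rpow \<rho> s) = mat_rpow \<rho> (1 - s) * channel_dual d T Y * mat_rpow \<rho> s"
proof (rule mtrace_mult_eqI)
  let ?P = "mat_rpow \<rho> (1 - s)" and ?Q = "mat_rpow \<rho> s" and ?Td = "channel_dual d T"
  have X: "?P * Y * ?Q \<in> carrier_mat d d" using Y by simp
  have TdY: "?Td Y \<in> carrier_mat d d" using channel_dual_carrier[OF T Y] .
  show "T (?P * Y * ?Q) \<in> carrier_mat d d"
    using T kraus_rep_carrier[OF _ X] unfolding quantum_channel_def by blast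
  show "?P * ?Td Y * ?Q \<in> carrier_mat d d" using TdY by simp
  fix Z :: "complex mat" assume Z: "Z \<in> carrier_mat d d"
  have TdA: "?Td (adj Z) \<in> carrier_mat d d" using channel_dual_carrier[OF T] Z by simp
  have "mtrace (T (?P * Y * ?Q) * Z) = mtrace (Z * T (?P * Y * ?Q))"
    using mtrace_comm[of "T (?P * Y * ?Q)" d d Z] \<open>T (?P * Y * ?Q) \<in> carrier_mat d d\<close> Z by simp
  also have "\<dots> = mtrace (?Td Z * (?P * Y * ?Q))" using mtrace_channel_dual[OF T X Z] .
  also have "?Td Z = adj (?Td (adj Z))" using channel_dual_adj[OF T, of "adj Z"] Z by simp
  also have "mtrace (adj (?Td (adj Z)) * (?P * Y * ?Q)) = s_inner \<rho> s (?Td (adj Z)) Y"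
    unfolding s_inner_def using TdA Y by (simp add: assoc_mult_mat[of _ d d _ d _ d])
  also have "\<dots> = s_inner \<rho> s (adj Z) (?Td Y)" using db Y Z unfolding detailed_balance_def by simp
  also have "\<dots> = mtrace (?P * ?Td Y * ?Q * Z)"
    unfolding s_inner_def using Z TdY mtrace_comm[of Z d d "?P * ?Td Y * ?Q"]
    by (simp add: assoc_mult_mat[of _ d d _ d _ d])
  finally show "mtrace (T (?P * Y * ?Q) * Z) = mtrace (?P * ?Td Y * ?Q * Z)" .
qed

lemma detailed_balance_fixes_rho:
  assumes "quantum_channel d T" "detailed_balance d \<rho> s T"
  shows "T \<rho> = \<rho>"
proof -
  have "mat_rpow \<rho> (1 - s) * 1\<^sub>m d * mat_rpow \<rho> s = \<rho>"
    using right_mult_one_mat[OF rpow_carrier[of "1 - s"]] rpow_add[of "1 - s" s] rpow_one by simp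
  then show ?thesis using detailed_balance_conj[OF assms, of "1\<^sub>m d"] by (simp add: channel_dual_one[OF assms(1)])
qed

lemma channel_frame:
  assumes T: "quantum_channel d T" and db: "detailed_balance d \<rho> s T" and X: "X \<in> carrier_mat d d"
  shows "T (frame X) = frame (framed_dual T X)"
proof -
  have "frame X = mat_rpow \<rho> (1 - s) * unframe X * mat_rpow \<rho> s"
    using X frame_frame[of "unframe X"] by (simp add: frame_unframe)
  then show ?thesis unfolding framed_dual_def
    using detailed_balance_conj[OF T db] frame_frame channel_dual_carrier[OF T] X by simp
qed

lemma framed_dual_frame:
  "quantum_channel d T \<Longrightarrow> X \<in> carrier_mat d d \<Longrightarrow> framed_dual T (frame X) = frame (channel_dual d T X)"
  by (simp add: framed_dual_def unframe_frame)

lemma framed_dual_carrier: "quantum_channel d T \<Longrightarrow> X \<in> carrier_mat d d \<Longrightarrow> framed_dual T X \<in> carrier_mat d d"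
  by (simp add: framed_dual_def channel_dual_carrier)

lemma mat_linear_framed_dual: assumes "quantum_channel d T" shows "mat_linear d (framed_dual T)"
proof -
  have "mat_linear d ((\<lambda>X. mat_rpow \<rho> ((1 - s) / 2) * X * mat_rpow \<rho> (s / 2)) \<circ>
      (channel_dual d T \<circ> (\<lambda>X. mat_rpow \<rho> (- (1 - s) / 2) * X * mat_rpow \<rho> (- s / 2))))"
    by (intro mat_linear_comp mat_linear_sandwich mat_linear_channel_dual[OF assms]) auto
  then show ?thesis by (rule mat_linear_cong) (simp add: framed_dual_def frame_def unframe_def)
qed

lemma framed_dual_self_adjoint:
  assumes T: "quantum_channel d T" and db: "detailed_balance d \<rho> s T"
  shows "self_adjoint d (framed_dual T)"
  unfolding self_adjoint_def
proof (intro ballI)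
  fix A B :: "complex mat" assume A: "A \<in> carrier_mat d d" and B: "B \<in> carrier_mat d d"
  let ?Td = "channel_dual d T"
  have c: "unframe A \<in> carrier_mat d d" "unframe B \<in> carrier_mat d d"
    "?Td (unframe A) \<in> carrier_mat d d" "?Td (unframe B) \<in> carrier_mat d d"
    using A B channel_dual_carrier[OF T] by auto
  have "hs_inner (framed_dual T A) B = s_inner \<rho> s (?Td (unframe A)) (unframe B)"
    unfolding framed_dual_def s_inner_frame[OF c(3,2)] using B by (simp add: frame_unframe)
  also have "\<dots> = s_inner \<rho> s (unframe A) (?Td (unframe B))"
    using db c unfolding detailed_balance_def by simp
  also have "\<dots> = hs_inner A (framed_dual T B)"
    unfolding framed_dual_def s_inner_frame[OF c(1,4)] using A by (simp add: frame_unframe)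
  finally show "hs_inner (framed_dual T A) B = hs_inner A (framed_dual T B)" .
qed

lemma channel_spectrum_frame:
  assumes conj: "\<And>X. X \<in> carrier_mat d d \<Longrightarrow> T (frame X) = frame (L X)"
    and L: "\<And>X. X \<in> carrier_mat d d \<Longrightarrow> L X \<in> carrier_mat d d"
  shows "channel_spectrum d T = channel_spectrum d L"
proof (intro equalityI subsetI)
  fix c assume "c \<in> channel_spectrum d T"
  then obtain X where X: "X \<in> carrier_mat d d" "X \<noteq> 0\<^sub>m d d" "T X = c \<cdot>\<^sub>m X"
    unfolding channel_spectrum_def by blast
  define Y where "Y = unframe X"
  have Y: "Y \<in> carrier_mat d d" "frame Y = X" unfolding Y_def using X(1) by (simp_all add: frame_unframe)
  have "frame (L Y) = T X" using conj[OF Y(1)] Y(2) by simp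
  also have "\<dots> = frame (c \<cdot>\<^sub>m Y)" using X(3) frame_smult[OF Y(1)] Y(2) by simp
  finally have "L Y = c \<cdot>\<^sub>m Y" using frame_inj[OF L[OF Y(1)]] Y(1) by simp
  moreover have "Y \<noteq> 0\<^sub>m d d" using X(2) Y(2) frame_zero by metis
  ultimately show "c \<in> channel_spectrum d L" unfolding channel_spectrum_def using Y(1) by blast
next
  fix c assume "c \<in> channel_spectrum d L"
  then obtain Y where Y: "Y \<in> carrier_mat d d" "Y \<noteq> 0\<^sub>m d d" "L Y = c \<cdot>\<^sub>m Y"
    unfolding channel_spectrum_def by blast
  have "frame Y \<noteq> 0\<^sub>m d d" using Y(1,2) frame_inj[OF Y(1), of "0\<^sub>m d d"] frame_zero by auto
  moreover have "T (frame Y) = c \<cdot>\<^sub>m frame Y" unfolding conj[OF Y(1)] Y(3) frame_smult[OF Y(1)] ..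
  ultimately show "c \<in> channel_spectrum d T" unfolding channel_spectrum_def using Y(1) by auto
qed

lemma framed_dual_spectrum_bound:
  assumes T: "quantum_channel d T" and db: "detailed_balance d \<rho> s T"
  shows "channel_spectrum d (framed_dual T) \<subseteq> complex_of_real ` {-1..1}"
proof
  fix c assume c: "c \<in> channel_spectrum d (framed_dual T)"
  obtain r where r: "c = complex_of_real r"
    using self_adjoint_spectrum_real[OF framed_dual_self_adjoint[OF T db] c] by blast
  have "channel_spectrum d (framed_dual T) = channel_spectrum d (channel_dual d T)"
    by (rule channel_spectrum_frame) (simp_all add: framed_dual_frame[OF T] channel_dual_carrier[OF T])
  then have "\<bar>r\<bar> \<le> 1" using c r channel_dual_eigenvalue_bound[OF T] by simp
  then show "c \<in> complex_of_real ` {-1..1}" unfolding r by (auto simp: abs_le_iff)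
qed

end

section \<open>The composition \<open>M \<circ> N \<circ> M\<close>\<close>

lemma sandwich_fixed_points:
  assumes M: "quantum_channel d M" and N: "quantum_channel d N"
    and fpN: "fixed_points d N = {\<rho>}" and M_rho: "M \<rho> = \<rho>"
    and multiple: "\<And>Z. Z \<in> carrier_mat d d \<Longrightarrow> N Z = Z \<Longrightarrow> \<exists>c. Z = c \<cdot>\<^sub>m \<rho>"
    and reduce: "\<And>\<sigma>. \<sigma> \<in> carrier_mat d d \<Longrightarrow> M (N (M \<sigma>)) = \<sigma> \<Longrightarrow> N (M \<sigma>) = M \<sigma>"
  shows "fixed_points d (M \<circ> N \<circ> M) = {\<rho>}"
proof -
  have rs: "is_state d \<rho>" "N \<rho> = \<rho>" using fpN unfolding fixed_points_def by auto
  have rc: "\<rho> \<in> carrier_mat d d" "mtrace \<rho> = 1" using rs(1) unfolding is_state_def by auto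
  have unique: "\<sigma> = \<rho>" if st: "is_state d \<sigma>" and fixed: "M (N (M \<sigma>)) = \<sigma>" for \<sigma>
  proof -
    have sc: "\<sigma> \<in> carrier_mat d d" "mtrace \<sigma> = 1" using st unfolding is_state_def by auto
    have "M \<sigma> \<in> carrier_mat d d" using mat_linear_carrier[OF mat_linear_channel[OF M] sc(1)] .
    then obtain c where c: "M \<sigma> = c \<cdot>\<^sub>m \<rho>" using multiple reduce[OF sc(1) fixed] by blast
    have "\<sigma> = M (N (c \<cdot>\<^sub>m \<rho>))" using fixed unfolding c by simp
    also have "\<dots> = c \<cdot>\<^sub>m \<rho>"
      using rc(1) rs(2) M_rho mat_linear_carrier[OF mat_linear_channel[OF N]]
      by (simp add: mat_linear_smult[OF mat_linear_channel[OF M]] mat_linear_smult[OF mat_linear_channel[OF N]])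
    finally have \<sigma>: "\<sigma> = c \<cdot>\<^sub>m \<rho>" .
    have "c = 1" using sc(2) rc(2) mtrace_smult[OF rc(1), of c] unfolding \<sigma> by simp
    then show "\<sigma> = \<rho>" using \<sigma> rc(1) by (auto intro!: eq_matI)
  qed
  show ?thesis
  proof (intro equalityI subsetI)
    fix \<sigma> assume "\<sigma> \<in> fixed_points d (M \<circ> N \<circ> M)"
    then show "\<sigma> \<in> {\<rho>}" using unique unfolding fixed_points_def by simp
  next
    fix \<sigma> assume "\<sigma> \<in> {\<rho>}"
    then show "\<sigma> \<in> fixed_points d (M \<circ> N \<circ> M)" using rs M_rho unfolding fixed_points_def by simp
  qed
qed

context positive_definite_frame
begin

lemma sandwich_frame:
  assumes M: "quantum_channel d M" "detailed_balance d \<rho> s M"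
    and N: "quantum_channel d N" "detailed_balance d \<rho> s N" and X: "X \<in> carrier_mat d d"
  shows "M (N (M (frame X))) = frame (framed_dual M (framed_dual N (framed_dual M X)))"
  using X by (simp add: channel_frame[OF M] channel_frame[OF N] framed_dual_carrier M(1) N(1))

lemma sandwich_spectrum_and_fixed:
  assumes M: "quantum_channel d M" "detailed_balance d \<rho> s M"
    and N: "quantum_channel d N" "detailed_balance d \<rho> s N"
    and spN: "channel_spectrum d N \<subseteq> complex_of_real ` {0..1}"
  shows "channel_spectrum d (M \<circ> N \<circ> M) \<subseteq> complex_of_real ` {0..1}"
    and "\<sigma> \<in> carrier_mat d d \<Longrightarrow> M (N (M \<sigma>)) = \<sigma> \<Longrightarrow> N (M \<sigma>) = M \<sigma>"
proof -
  let ?LM = "framed_dual M" and ?LN = "framed_dual N"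
  have LMc: "?LM X \<in> carrier_mat d d" and LNc: "?LN X \<in> carrier_mat d d" if "X \<in> carrier_mat d d" for X
    using that framed_dual_carrier M(1) N(1) by auto
  have "channel_spectrum d N = channel_spectrum d ?LN"
    by (rule channel_spectrum_frame) (simp_all add: channel_frame[OF N] LNc)
  note sandwich = self_adjoint_sandwich[OF mat_linear_framed_dual[OF M(1)] framed_dual_self_adjoint[OF M]
      framed_dual_spectrum_bound[OF M] mat_linear_framed_dual[OF N(1)] framed_dual_self_adjoint[OF N]
      spN[unfolded this]]
  have "channel_spectrum d (M \<circ> N \<circ> M) = channel_spectrum d (?LM \<circ> ?LN \<circ> ?LM)"
    by (rule channel_spectrum_frame) (simp_all add: sandwich_frame[OF M N] LMc LNc)
  then show "channel_spectrum d (M \<circ> N \<circ> M) \<subseteq> complex_of_real ` {0..1}" using sandwich(1) by simp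
  show "N (M \<sigma>) = M \<sigma>" if \<sigma>: "\<sigma> \<in> carrier_mat d d" and fixed: "M (N (M \<sigma>)) = \<sigma>"
  proof -
    define Y where "Y = unframe \<sigma>"
    have Y: "Y \<in> carrier_mat d d" "frame Y = \<sigma>" unfolding Y_def using \<sigma> by (simp_all add: frame_unframe)
    have "frame (?LM (?LN (?LM Y))) = frame Y"
      using sandwich_frame[OF M N Y(1)] fixed Y(2) by simp
    then have "?LM (?LN (?LM Y)) = Y" using frame_inj LMc LNc Y(1) by simp
    then have "?LN (?LM Y) = ?LM Y" using sandwich(2)[OF Y(1)] by simp
    then show ?thesis
      using channel_frame[OF M Y(1)] channel_frame[OF N LMc[OF Y(1)]] Y(2) by simp
  qed
qed

end

theorem lemma4p1:
  fixes n :: nat and H :: "complex mat" and \<beta> s :: real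
    and M N :: "complex mat \<Rightarrow> complex mat"
  assumes H: "H \<in> carrier_mat (2^n) (2^n)" "hermitian H"
    and beta: "\<beta> > 0"
    and s: "0 \<le> s" "s \<le> 1"
    and M: "quantum_channel (2^n) M" "detailed_balance (2^n) (gibbs \<beta> H) s M"
    and N: "quantum_channel (2^n) N" "detailed_balance (2^n) (gibbs \<beta> H) s N"
  shows "detailed_balance (2^n) (gibbs \<beta> H) s (M \<circ> N \<circ> M)
    \<and> (fixed_points (2^n) N = {gibbs \<beta> H} \<and> channel_spectrum (2^n) N \<subseteq> complex_of_real ` {0..1}
       \<longrightarrow> fixed_points (2^n) (M \<circ> N \<circ> M) = {gibbs \<beta> H}
           \<and> channel_spectrum (2^n) (M \<circ> N \<circ> M) \<subseteq> complex_of_real ` {0..1})"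
proof -
  have d: "(0::nat) < 2^n" by simp
  obtain V \<mu> where V: "spectral_decomposition (2^n) (gibbs \<beta> H) V \<mu>" "\<forall>x\<in>set \<mu>. 0 < x"
    "\<And>t. mat_rpow (gibbs \<beta> H) t = spectral_fun V \<mu> (\<lambda>x. x powr t)"
    using gibbs_spectral[OF H d] by blast
  interpret positive_definite_frame "2^n" "gibbs \<beta> H" s V \<mu> using V by unfold_locales
  show ?thesis
    using detailed_balance_sandwich[OF M N] sandwich_spectrum_and_fixed[OF M N]
      sandwich_fixed_points[OF M(1) N(1) _ detailed_balance_fixes_rho[OF M] fixed_mat_multiple[OF N(1) _ V(1,2) d]]
    by blast
qed

end
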